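(* Fix $g\ge1$ and $0\le g'<g$, $g''=g-g'$. Equip $\mathbb{P}_{g'}\backslash\mathfrak{S}_g$ with the Weil–Petersson metric $g_{WP}$ and $A_{g'}\times\mathcal{T}^{>0}_{g''}$ with the product metric $g'_{WP}+g''_{trWP}$. Then the projection $\pi_{g'}:\mathbb{P}_{g'}\backslash\mathfrak{S}_g\to A_{g'}\times\mathcal{T}^{>0}_{g''}$ is a Riemannian submersion; in particular it is $1$-Lipschitz.
   Context: $\mathfrak{S}_g=\{\tau\in\mathrm{Sym}(g,\mathbb{C}):\operatorname{Im}\tau>0\}$, $\tau=X+iY$, with $\mathrm{Sp}(2g,\mathbb{R})$ acting by $\begin{pmatrix}A&B\\C&D\end{pmatrix}\cdot\tau=(A\tau+B)(C\tau+D)^{-1}$; $\Gamma=\mathrm{Sp}(2g,\mathbb{Z})/\{\pm1\}$. The Weil–Petersson metric $g_{WP}$ is the invariant metric with $\|V\|_\tau^2=\frac12\big(\operatorname{tr}(Y^{-1}V_XY^{-1}V_X)+\operatorname{tr}(Y^{-1}V_YY^{-1}V_Y)\big)$ for $V=V_X+iV_Y\in\mathrm{Sym}(g,\mathbb{C})\cong T_\tau\mathfrak{S}_g$ (Kähler form $\frac{i}{4}\operatorname{tr}(Y^{-1}d\tau Y^{-1}d\bar\tau)$); $g'_{WP}$ is the same metric on $\mathfrak{S}_{g'}$ and on $A_{g'}=\mathrm{Sp}(2g',\mathbb{Z})\backslash\mathfrak{S}_{g'}$. Block decomposition $\tau=\begin{pmatrix}\tau'&\tau'''\\{}^t\tau'''&\tau''\end{pmatrix}$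 with $\tau'$ of size $g'\times g'$, similarly for $X,Y$. $P_{g'}\subset\mathrm{Sp}(2g,\mathbb{R})$ is the parabolic subgroup of matrices $\begin{pmatrix}A'&0&B'&*\\ *&u&*&*\\ C'&0&D'&*\\0&0&0&(u^t)^{-1}\end{pmatrix}$ with $\begin{pmatrix}A'&B'\\C'&D'\end{pmatrix}\in\mathrm{Sp}(2g',\mathbb{R})$, $u\in\mathrm{GL}(g'',\mathbb{R})$ (the normalizer of the flag $\langle e_{g'+1},\dots,e_g\rangle\subset\langle e_{g'+1},\dots,e_g\rangle^\perp$), and $\mathbb{P}_{g'}=\Gamma\cap P_{g'}$. The map $\pi_{g'}(\tau)=(\tau',\,Y''-{}^tY'''(Y')^{-1}Y''')$ from $\mathfrak{S}_g$ to $\mathfrak{S}_{g'}\times\mathrm{Sym}^+(g'',\mathbb{R})$ induces the projection $\mathbb{P}_{g'}\backslash\mathfrak{S}_g\to A_{g'}\times\mathcal{T}^{>0}_{g''}$, where $\mathcal{T}^{>0}_{g''}=\mathrm{GL}(g'',\mathbb{Z})\backslash\mathrm{Sym}^+(g'',\mathbb{R})$ (action $t\mapsto ata^t$) with metric $g''_{trWP}=\frac12\operatorname{tr}(t^{-1}dt\,t^{-1}dt)$. *)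

theory Defs
  imports Complex_Main "Jordan_Normal_Form.Matrix"
begin

text \<open>Real n x n matrices are JNF matrices; a point tau = X + iY of the Siegel space is
  the pair (X, Y) of real symmetric matrices, and a tangent vector V = V_X + i V_Y is the pair
  (V_X, V_Y).\<close>

definition mtr :: "real mat \<Rightarrow> real" where
  "mtr A = (\<Sum>i<dim_row A. A $$ (i, i))"

definition minv :: "real mat \<Rightarrow> real mat" where
  "minv A = (THE B. B \<in> carrier_mat (dim_row A) (dim_row A) \<and>
                    A * B = 1\<^sub>m (dim_row A) \<and> B * A = 1\<^sub>m (dim_row A))"

definition symmat :: "nat \<Rightarrow> real mat \<Rightarrow> bool" where
  "symmat n A \<longleftrightarrow> A \<in> carrier_mat n n \<and> transpose_mat A = A"

definition posdef :: "nat \<Rightarrow> real mat \<Rightarrow> bool" where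
  "posdef n A \<longleftrightarrow> symmat n A \<and>
     (\<forall>v \<in> carrier_vec n. v \<noteq> 0\<^sub>v n \<longrightarrow> scalar_prod v (A *\<^sub>v v) > 0)"

definition siegel :: "nat \<Rightarrow> real mat \<Rightarrow> real mat \<Rightarrow> bool" where
  "siegel n X Y \<longleftrightarrow> symmat n X \<and> posdef n Y"

text \<open>Weil--Petersson inner product at tau = X + iY of V = VX + i VY and W = WX + i WY
  (real part of the Hermitian form; the norm is the given one).\<close>
definition wp_inner :: "real mat \<Rightarrow> real mat \<times> real mat \<Rightarrow> real mat \<times> real mat \<Rightarrow> real" where
  "wp_inner Y V W = (let Yi = minv Y in
     (mtr (Yi * fst V * Yi * fst W) + mtr (Yi * snd V * Yi * snd W)) / 2)"

definition trwp_inner :: "real mat \<Rightarrow> real mat \<Rightarrow> real mat \<Rightarrow> real" where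
  "trwp_inner t A B = (let ti = minv t in mtr (ti * A * ti * B) / 2)"

definition proj :: "nat \<Rightarrow> real mat \<times> real mat \<Rightarrow> (real mat \<times> real mat) \<times> real mat" where
  "proj g' \<tau> = (let (X, Y) = \<tau>;
                   (X1, X2, X3, X4) = split_block X g' g';
                   (Y1, Y2, Y3, Y4) = split_block Y g' g'
               in ((X1, Y1), Y4 - transpose_mat Y2 * minv Y1 * Y2))"

definition mat_curve_deriv :: "(real \<Rightarrow> real mat) \<Rightarrow> real mat \<Rightarrow> bool" where
  "mat_curve_deriv c D \<longleftrightarrow>
     dim_row (c 0) = dim_row D \<and> dim_col (c 0) = dim_col D \<and>
     (\<forall>i < dim_row D. \<forall>j < dim_col D.
        ((\<lambda>t. c t $$ (i, j)) has_real_derivative D $$ (i, j)) (at 0))"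

definition dproj :: "nat \<Rightarrow> real mat \<times> real mat \<Rightarrow> real mat \<times> real mat
                     \<Rightarrow> (real mat \<times> real mat) \<times> real mat \<Rightarrow> bool" where
  "dproj g' \<tau> V W \<longleftrightarrow>
     (let c = (\<lambda>s. proj g' (fst \<tau> + s \<cdot>\<^sub>m fst V, snd \<tau> + s \<cdot>\<^sub>m snd V)) in
       mat_curve_deriv (\<lambda>s. fst (fst (c s))) (fst (fst W)) \<and>
       mat_curve_deriv (\<lambda>s. snd (fst (c s))) (snd (fst W)) \<and>
       mat_curve_deriv (\<lambda>s. snd (c s)) (snd W))"

definition target_sqnorm :: "(real mat \<times> real mat) \<times> real mat \<Rightarrow>
                              (real mat \<times> real mat) \<times> real mat \<Rightarrow> real" where
  "target_sqnorm p W = wp_inner (snd (fst p)) (fst W) (fst W) + trwp_inner (snd p) (snd W) (snd W)"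

end

theory Submission
  imports Defs "Jordan_Normal_Form.Determinant"
begin

text \<open>Fix \<open>\<tau> = X + iY\<close> and split \<open>Y = [[Y\<^sub>1, Y\<^sub>2], [Y\<^sub>2\<^sup>T, Y\<^sub>4]]\<close>. With \<open>H = Y\<^sub>1\<^sup>-\<^sup>1 Y\<^sub>2\<close> and the
  Schur complement \<open>t = Y\<^sub>4 - Y\<^sub>2\<^sup>T Y\<^sub>1\<^sup>-\<^sup>1 Y\<^sub>2\<close> one has \<open>Y = L\<^sup>T diag(Y\<^sub>1, t) L\<close> for the unipotent
  \<open>L = [[1, H], [0, 1]]\<close>. In the coordinates \<open>U \<mapsto> L\<^sup>-\<^sup>T U L\<^sup>-\<^sup>1\<close> the form
  \<open>tr (Y\<^sup>-\<^sup>1 A Y\<^sup>-\<^sup>1 B)\<close> becomes \<open>tr (D\<^sup>-\<^sup>1 A' D\<^sup>-\<^sup>1 B')\<close> with \<open>D = diag(Y\<^sub>1, t)\<close> block diagonal,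
  and the differential of \<open>\<pi>\<close> reads off diagonal blocks: the upper left blocks of \<open>V\<^sub>X\<close> and
  \<open>V\<^sub>Y\<close>, and the lower right block of the transformed \<open>V\<^sub>Y\<close>, which is the derivative of \<open>t\<close>.
  Hence the horizontal vectors are those that are block diagonal in these coordinates, on them
  the metric splits as \<open>g'_WP + g''_trWP\<close>, and every tangent vector is the orthogonal sum of
  the horizontal lift of its image and a vertical vector \<open>K\<close> of squared length
  \<open>tr ((Y\<^sup>-\<^sup>1 K)\<^sup>2) \<ge> 0\<close>.\<close>

lemma minv_eqI:
  assumes A: "A \<in> carrier_mat n n" and B: "B \<in> carrier_mat n n" and AB: "A * B = 1\<^sub>m n"
  shows "minv A = B"
proof -
  have BA: "B * A = 1\<^sub>m n" using mat_mult_left_right_inverse[OF A B AB] .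
  show ?thesis unfolding minv_def carrier_matD(1)[OF A]
  proof (rule the_equality)
    fix C assume C: "C \<in> carrier_mat n n \<and> A * C = 1\<^sub>m n \<and> C * A = 1\<^sub>m n"
    have "C = C * (A * B)" using C AB right_mult_one_mat[of C n n] by auto
    also have "\<dots> = (C * A) * B" using C A B by (intro assoc_mult_mat[symmetric]) auto
    finally show "C = B" using C B by simp
  qed (use B AB BA in auto)
qed

lemma mult_adj_mat_div_det:
  fixes A :: "real mat"
  assumes A: "A \<in> carrier_mat n n" and d: "det A \<noteq> 0"
  shows "A * ((1 / det A) \<cdot>\<^sub>m adj_mat A) = 1\<^sub>m n"
proof -
  have "A * ((1 / det A) \<cdot>\<^sub>m adj_mat A) = (1 / det A) \<cdot>\<^sub>m (A * adj_mat A)"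
    using A adj_mat(1)[OF A] by (simp add: mult_smult_distrib)
  also have "\<dots> = 1\<^sub>m n" using adj_mat(2)[OF A] d by (auto intro!: eq_matI)
  finally show ?thesis .
qed

lemma minv_adj_mat:
  assumes A: "A \<in> carrier_mat n n" and d: "det A \<noteq> 0"
  shows "minv A = (1 / det A) \<cdot>\<^sub>m adj_mat A"
  using minv_eqI[OF A _ mult_adj_mat_div_det[OF A d]] adj_mat(1)[OF A] by simp

lemma minv_mat:
  assumes A: "A \<in> carrier_mat n n" and d: "det A \<noteq> 0"
  shows "minv A \<in> carrier_mat n n" "A * minv A = 1\<^sub>m n" "minv A * A = 1\<^sub>m n"
proof -
  show c: "minv A \<in> carrier_mat n n" unfolding minv_adj_mat[OF A d] using adj_mat(1)[OF A] by simp
  show ab: "A * minv A = 1\<^sub>m n" unfolding minv_adj_mat[OF A d] by (rule mult_adj_mat_div_det[OF A d])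
  show "minv A * A = 1\<^sub>m n" using mat_mult_left_right_inverse[OF A c ab] .
qed

lemma transpose_minv:
  assumes A: "A \<in> carrier_mat n n" and d: "det A \<noteq> 0" and s: "transpose_mat A = A"
  shows "transpose_mat (minv A) = minv A"
proof -
  note inv = minv_mat[OF A d]
  have "A * transpose_mat (minv A) = transpose_mat (minv A * transpose_mat A)"
    using A inv(1) by (simp add: transpose_mult)
  also have "\<dots> = 1\<^sub>m n" using inv(3) s by simp
  finally have "minv A = transpose_mat (minv A)" using minv_eqI[OF A] inv(1) by simp
  then show ?thesis by simp
qed

lemma posdef_det_nonzero:
  assumes "posdef n Y"
  shows "det Y \<noteq> 0"
proof
  have Y: "Y \<in> carrier_mat n n" using assms unfolding posdef_def symmat_def by simp
  assume "det Y = 0"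
  then obtain v where "v \<in> carrier_vec n" "v \<noteq> 0\<^sub>v n" "Y *\<^sub>v v = 0\<^sub>v n"
    using det_0_iff_vec_prod_zero[OF Y] by blast
  then show False using assms unfolding posdef_def by fastforce
qed

lemma sum_lessThan_add:
  fixes f :: "nat \<Rightarrow> 'a::comm_monoid_add"
  shows "(\<Sum>i<n + k. f i) = (\<Sum>i<n. f i) + (\<Sum>i<k. f (n + i))"
  by (induction k) (auto simp: add.assoc)

lemma mtr_mult:
  assumes "A \<in> carrier_mat n p" "B \<in> carrier_mat p n"
  shows "mtr (A * B) = (\<Sum>i<n. \<Sum>j<p. A $$ (i, j) * B $$ (j, i))"
proof -
  have "row A i \<bullet> col B i = (\<Sum>j<p. A $$ (i, j) * B $$ (j, i))" if "i < n" for i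
    using assms that unfolding scalar_prod_def by (auto intro!: sum.cong simp: atLeast0LessThan)
  then show ?thesis using assms unfolding mtr_def by (auto intro!: sum.cong)
qed

lemma mtr_mult_comm:
  assumes "A \<in> carrier_mat n p" "B \<in> carrier_mat p n"
  shows "mtr (A * B) = mtr (B * A)"
  unfolding mtr_mult[OF assms] mtr_mult[OF assms(2,1)]
  by (subst sum.swap) (simp add: mult.commute)

lemma mtr_add:
  assumes "A \<in> carrier_mat n n" "B \<in> carrier_mat n n"
  shows "mtr (A + B) = mtr A + mtr B"
  using assms unfolding mtr_def by (simp add: sum.distrib)

lemma mtr_four_block_mat:
  assumes "A \<in> carrier_mat n n" "D \<in> carrier_mat k k"
  shows "mtr (four_block_mat A B C D) = mtr A + mtr D"
  using assms unfolding mtr_def by (simp add: sum_lessThan_add)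

lemma uminus_zero_mat [simp]: "- 0\<^sub>m nr nc = (0\<^sub>m nr nc :: 'a :: group_add mat)"
  by (intro eq_matI) auto

lemma assoc_mult_mat_dims:
  fixes A :: "'a :: semiring_0 mat"
  assumes "dim_col A = dim_row B" "dim_col B = dim_row C"
  shows "A * B * C = A * (B * C)"
  using assms by (intro assoc_mult_mat[of A "dim_row A" "dim_col A" B "dim_col B" C "dim_col C"]) auto

lemma add_mult_distrib_mat_dims:
  fixes A :: "'a :: semiring_0 mat"
  assumes "dim_row A = dim_row B" "dim_col A = dim_col B" "dim_col A = dim_row C"
  shows "(A + B) * C = A * C + B * C"
  using assms by (intro add_mult_distrib_mat[of A "dim_row A" "dim_col A" B C "dim_col C"]) auto

lemma mult_add_distrib_mat_dims:
  fixes A :: "'a :: semiring_0 mat"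
  assumes "dim_row B = dim_row C" "dim_col B = dim_col C" "dim_col A = dim_row B"
  shows "A * (B + C) = A * B + A * C"
  using assms by (intro mult_add_distrib_mat[of A "dim_row A" "dim_col A" B "dim_col B" C]) auto

lemma minus_mult_distrib_mat_dims:
  fixes A :: "'a :: ring mat"
  assumes "dim_row A = dim_row B" "dim_col A = dim_col B" "dim_col A = dim_row C"
  shows "(A - B) * C = A * C - B * C"
  using assms by (intro minus_mult_distrib_mat[of A "dim_row A" "dim_col A" B C "dim_col C"]) auto

lemma mult_minus_distrib_mat_dims:
  fixes A :: "'a :: ring mat"
  assumes "dim_row B = dim_row C" "dim_col B = dim_col C" "dim_col A = dim_row B"
  shows "A * (B - C) = A * B - A * C"
  using assms by (intro mult_minus_distrib_mat[of A "dim_row A" "dim_col A" B "dim_col B" C]) auto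

lemma transpose_mult_dims:
  fixes A :: "'a :: comm_semiring_0 mat"
  assumes "dim_col A = dim_row B"
  shows "transpose_mat (A * B) = transpose_mat B * transpose_mat A"
  using assms by (intro transpose_mult[of A "dim_row A" "dim_col A" B "dim_col B"]) auto

lemmas mat_algebra_dims = assoc_mult_mat_dims add_mult_distrib_mat_dims mult_add_distrib_mat_dims
  minus_mult_distrib_mat_dims mult_minus_distrib_mat_dims transpose_mult_dims

definition ul_blk :: "nat \<Rightarrow> 'a mat \<Rightarrow> 'a mat" where
  "ul_blk m A = fst (split_block A m m)"

definition ur_blk :: "nat \<Rightarrow> 'a mat \<Rightarrow> 'a mat" where
  "ur_blk m A = fst (snd (split_block A m m))"

definition ll_blk :: "nat \<Rightarrow> 'a mat \<Rightarrow> 'a mat" where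
  "ll_blk m A = fst (snd (snd (split_block A m m)))"

definition lr_blk :: "nat \<Rightarrow> 'a mat \<Rightarrow> 'a mat" where
  "lr_blk m A = snd (snd (snd (split_block A m m)))"

lemma blk_eqs:
  "ul_blk m A = mat m m (\<lambda>ij. A $$ ij)"
  "ur_blk m A = mat m (dim_col A - m) (\<lambda>(i, j). A $$ (i, j + m))"
  "ll_blk m A = mat (dim_row A - m) m (\<lambda>(i, j). A $$ (i + m, j))"
  "lr_blk m A = mat (dim_row A - m) (dim_col A - m) (\<lambda>(i, j). A $$ (i + m, j + m))"
  unfolding ul_blk_def ur_blk_def ll_blk_def lr_blk_def split_block_def Let_def by auto

lemma blk_carrier_mat:
  assumes "A \<in> carrier_mat (m + k) (m + k)"
  shows "ul_blk m A \<in> carrier_mat m m" "ur_blk m A \<in> carrier_mat m k"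
    "ll_blk m A \<in> carrier_mat k m" "lr_blk m A \<in> carrier_mat k k"
  using assms unfolding blk_eqs by auto

lemma four_block_mat_blks:
  assumes "A \<in> carrier_mat (m + k) (m + k)"
  shows "A = four_block_mat (ul_blk m A) (ur_blk m A) (ll_blk m A) (lr_blk m A)"
  using split_block(5)[of A m m "ul_blk m A" "ur_blk m A" "ll_blk m A" "lr_blk m A" k k] assms
  unfolding ul_blk_def ur_blk_def ll_blk_def lr_blk_def by auto

lemma blks_four_block_mat:
  assumes "A \<in> carrier_mat m m" "B \<in> carrier_mat m k" "C \<in> carrier_mat k m" "D \<in> carrier_mat k k"
  shows "ul_blk m (four_block_mat A B C D) = A" "ur_blk m (four_block_mat A B C D) = B"
    "ll_blk m (four_block_mat A B C D) = C" "lr_blk m (four_block_mat A B C D) = D"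
  using assms unfolding blk_eqs by (auto intro!: eq_matI)

lemma blk_minus:
  assumes "A \<in> carrier_mat (m + k) (m + k)" "B \<in> carrier_mat (m + k) (m + k)"
  shows "ul_blk m (A - B) = ul_blk m A - ul_blk m B" "lr_blk m (A - B) = lr_blk m A - lr_blk m B"
  using assms unfolding blk_eqs by (auto intro!: eq_matI)

lemma blks_symmetric:
  assumes A: "A \<in> carrier_mat (m + k) (m + k)" and s: "transpose_mat A = A"
  shows "ll_blk m A = transpose_mat (ur_blk m A)" "transpose_mat (ul_blk m A) = ul_blk m A"
    "transpose_mat (lr_blk m A) = lr_blk m A"
proof -
  have e: "A $$ (i, j) = A $$ (j, i)" if "i < m + k" "j < m + k" for i j
    using arg_cong[OF s, of "\<lambda>B. B $$ (j, i)"] that A by auto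
  show "ll_blk m A = transpose_mat (ur_blk m A)" unfolding blk_eqs using A by (auto intro!: eq_matI e)
  show "transpose_mat (ul_blk m A) = ul_blk m A" unfolding blk_eqs by (auto intro!: eq_matI e)
  show "transpose_mat (lr_blk m A) = lr_blk m A" unfolding blk_eqs using A by (auto intro!: eq_matI e)
qed

lemma four_block_mat_blks_symmetric:
  assumes "A \<in> carrier_mat (m + k) (m + k)" "transpose_mat A = A"
  shows "A = four_block_mat (ul_blk m A) (ur_blk m A) (transpose_mat (ur_blk m A)) (lr_blk m A)"
  using four_block_mat_blks[OF assms(1)] blks_symmetric(1)[OF assms] by simp

lemma proj_eq_blks:
  "proj m (X, Y) = ((ul_blk m X, ul_blk m Y),
     lr_blk m Y - transpose_mat (ur_blk m Y) * minv (ul_blk m Y) * ur_blk m Y)"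
  unfolding proj_def ul_blk_def ur_blk_def lr_blk_def
  by (cases "split_block X m m", cases "split_block Y m m") (auto simp: Let_def)

lemma zero_vec_append: "0\<^sub>v m @\<^sub>v 0\<^sub>v k = (0\<^sub>v (m + k) :: 'a :: zero vec)"
  by (intro eq_vecI) auto

lemma mult_mat_vec_zero: "A \<in> carrier_mat n m \<Longrightarrow> A *\<^sub>v 0\<^sub>v m = (0\<^sub>v n :: 'a :: semiring_0 vec)"
  by (intro eq_vecI) (auto simp: scalar_prod_def)

lemma posdef_blks:
  assumes "posdef (m + k) A"
  shows "posdef m (ul_blk m A)" "posdef k (lr_blk m A)"
proof -
  have A: "A \<in> carrier_mat (m + k) (m + k)" and As: "transpose_mat A = A"
    using assms unfolding posdef_def symmat_def by auto
  note c = blk_carrier_mat[OF A]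
  have quad: "(v @\<^sub>v w) \<bullet> (A *\<^sub>v (v @\<^sub>v w)) =
      v \<bullet> (ul_blk m A *\<^sub>v v + ur_blk m A *\<^sub>v w) + w \<bullet> (ll_blk m A *\<^sub>v v + lr_blk m A *\<^sub>v w)"
    if "v \<in> carrier_vec m" "w \<in> carrier_vec k" for v w
    using that c
    by (subst four_block_mat_blks[OF A], subst four_block_mat_mult_vec[of _ m m _ k _ k])
       (auto intro!: scalar_prod_append)
  have "v \<bullet> (ul_blk m A *\<^sub>v v) > 0" if v: "v \<in> carrier_vec m" "v \<noteq> 0\<^sub>v m" for v
  proof -
    have "v @\<^sub>v 0\<^sub>v k \<noteq> 0\<^sub>v (m + k)"
      using v by (simp flip: zero_vec_append)
    then have "(v @\<^sub>v 0\<^sub>v k) \<bullet> (A *\<^sub>v (v @\<^sub>v 0\<^sub>v k)) > 0"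
      using assms v unfolding posdef_def by auto
    then show ?thesis using quad[of v "0\<^sub>v k"] v c by (simp add: mult_mat_vec_zero)
  qed
  then show "posdef m (ul_blk m A)"
    using blks_symmetric(2)[OF A As] c unfolding posdef_def symmat_def by auto
  have "w \<bullet> (lr_blk m A *\<^sub>v w) > 0" if w: "w \<in> carrier_vec k" "w \<noteq> 0\<^sub>v k" for w
  proof -
    have "0\<^sub>v m @\<^sub>v w \<noteq> 0\<^sub>v (m + k)"
      using w append_vec_eq[of "0\<^sub>v m" m "0\<^sub>v m" w "0\<^sub>v k"] by (simp flip: zero_vec_append)
    then have "(0\<^sub>v m @\<^sub>v w) \<bullet> (A *\<^sub>v (0\<^sub>v m @\<^sub>v w)) > 0"
      using assms w unfolding posdef_def by auto
    then show ?thesis using quad[of "0\<^sub>v m" w] w c by (simp add: mult_mat_vec_zero)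
  qed
  then show "posdef k (lr_blk m A)"
    using blks_symmetric(3)[OF A As] c unfolding posdef_def symmat_def by auto
qed

section \<open>Derivatives of matrix curves\<close>

text \<open>Unlike \<^const>\<open>mat_curve_deriv\<close>, the whole curve is required to stay in the carrier,
  so that sums and products of curves are well behaved.\<close>

definition has_mat_deriv :: "nat \<Rightarrow> nat \<Rightarrow> (real \<Rightarrow> real mat) \<Rightarrow> real mat \<Rightarrow> bool" where
  "has_mat_deriv nr nc c D \<longleftrightarrow> (\<forall>s. c s \<in> carrier_mat nr nc) \<and> D \<in> carrier_mat nr nc \<and>
     (\<forall>i<nr. \<forall>j<nc. ((\<lambda>s. c s $$ (i, j)) has_real_derivative D $$ (i, j)) (at 0))"

lemma has_mat_deriv_affine:
  "A \<in> carrier_mat nr nc \<Longrightarrow> V \<in> carrier_mat nr nc \<Longrightarrow> has_mat_deriv nr nc (\<lambda>s. A + s \<cdot>\<^sub>m V) V"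
  unfolding has_mat_deriv_def by (auto intro!: derivative_eq_intros)

lemma has_mat_deriv_diff:
  "has_mat_deriv nr nc c D \<Longrightarrow> has_mat_deriv nr nc c' D' \<Longrightarrow>
     has_mat_deriv nr nc (\<lambda>s. c s - c' s) (D - D')"
  unfolding has_mat_deriv_def carrier_mat_def by (auto intro!: derivative_eq_intros)

lemma has_mat_deriv_transpose:
  "has_mat_deriv nr nc c D \<Longrightarrow> has_mat_deriv nc nr (\<lambda>s. transpose_mat (c s)) (transpose_mat D)"
  unfolding has_mat_deriv_def carrier_mat_def by auto

lemma has_mat_deriv_blks:
  assumes "has_mat_deriv (m + k) (m + k) c D"
  shows "has_mat_deriv m m (\<lambda>s. ul_blk m (c s)) (ul_blk m D)"
    "has_mat_deriv m k (\<lambda>s. ur_blk m (c s)) (ur_blk m D)"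
    "has_mat_deriv k k (\<lambda>s. lr_blk m (c s)) (lr_blk m D)"
  using assms unfolding has_mat_deriv_def blk_eqs carrier_mat_def by auto

lemma has_mat_deriv_mult:
  assumes 1: "has_mat_deriv nr n c D" and 2: "has_mat_deriv n nc c' D'"
  shows "has_mat_deriv nr nc (\<lambda>s. c s * c' s) (D * c' 0 + c 0 * D')"
proof -
  have c: "c s \<in> carrier_mat nr n" "D \<in> carrier_mat nr n" "c' s \<in> carrier_mat n nc" "D' \<in> carrier_mat n nc"
    for s using 1 2 unfolding has_mat_deriv_def by auto
  have "((\<lambda>s. (c s * c' s) $$ (i, j)) has_real_derivative (D * c' 0 + c 0 * D') $$ (i, j)) (at 0)"
    if ij: "i < nr" "j < nc" for i j
  proof -
    have prod: "(c s * c' s) $$ (i, j) = (\<Sum>q<n. c s $$ (i, q) * c' s $$ (q, j))" for s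
      using c(1,3)[of s] ij by (auto intro!: sum.cong simp: atLeast0LessThan scalar_prod_def)
    have "(D * c' 0 + c 0 * D') $$ (i, j) = (\<Sum>q<n. c 0 $$ (i, q) * D' $$ (q, j) + D $$ (i, q) * c' 0 $$ (q, j))"
      using c(1,3)[of 0] c(2,4) ij by (auto simp: atLeast0LessThan sum.distrib scalar_prod_def add.commute)
    moreover have "((\<lambda>s. \<Sum>q<n. c s $$ (i, q) * c' s $$ (q, j)) has_real_derivative
        (\<Sum>q<n. c 0 $$ (i, q) * D' $$ (q, j) + D $$ (i, q) * c' 0 $$ (q, j))) (at 0)"
      using 1 2 ij unfolding has_mat_deriv_def by (auto intro!: DERIV_sum DERIV_mult')
    ultimately show ?thesis unfolding prod by simp
  qed
  then show ?thesis using c unfolding has_mat_deriv_def by (auto intro!: mult_carrier_mat add_carrier_mat)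
qed

lemma has_mat_deriv_unique:
  assumes "has_mat_deriv nr nc c D" "has_mat_deriv nr nc c' D'"
    and "eventually (\<lambda>s. c s = c' s) (nhds 0)"
  shows "D = D'"
proof (rule eq_matI)
  fix i j assume "i < dim_row D'" "j < dim_col D'"
  then have ij: "i < nr" "j < nc" using assms(2) unfolding has_mat_deriv_def by auto
  have "((\<lambda>s. c' s $$ (i, j)) has_real_derivative D $$ (i, j)) (at 0)"
    using assms(1) ij unfolding has_mat_deriv_def
    by (subst DERIV_cong_ev[OF refl _ refl, of _ "\<lambda>s. c s $$ (i, j)"])
       (auto intro: eventually_mono[OF assms(3)])
  then show "D $$ (i, j) = D' $$ (i, j)"
    using assms(2) ij DERIV_unique unfolding has_mat_deriv_def by blast
qed (use assms(1,2) in \<open>auto simp: has_mat_deriv_def\<close>)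

lemma has_mat_deriv_differentiable:
  "has_mat_deriv nr nc c D \<Longrightarrow> i < nr \<Longrightarrow> j < nc \<Longrightarrow> (\<lambda>s. c s $$ (i, j)) differentiable (at 0)"
  unfolding has_mat_deriv_def real_differentiable_def by blast

lemma differentiable_imp_has_mat_deriv:
  assumes "\<And>s. c s \<in> carrier_mat nr nc"
    and "\<And>i j. i < nr \<Longrightarrow> j < nc \<Longrightarrow> (\<lambda>s. c s $$ (i, j)) differentiable (at 0)"
  shows "\<exists>D. has_mat_deriv nr nc c D"
proof -
  define D where "D = mat nr nc (\<lambda>(i, j). SOME d. ((\<lambda>s. c s $$ (i, j)) has_real_derivative d) (at 0))"
  have "((\<lambda>s. c s $$ (i, j)) has_real_derivative D $$ (i, j)) (at 0)" if "i < nr" "j < nc" for i j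
    using assms(2)[OF that] that unfolding D_def real_differentiable_def by (auto intro: someI)
  moreover have "D \<in> carrier_mat nr nc" unfolding D_def by simp
  ultimately show ?thesis using assms(1) unfolding has_mat_deriv_def by blast
qed

lemma differentiable_prod:
  fixes f :: "'i \<Rightarrow> 'a::real_normed_vector \<Rightarrow> 'b::real_normed_field"
  assumes "\<And>i. i \<in> I \<Longrightarrow> f i differentiable (at x within S)"
  shows "(\<lambda>x. \<Prod>i\<in>I. f i x) differentiable (at x within S)"
proof -
  obtain f' where "\<And>i. i \<in> I \<Longrightarrow> (f i has_derivative f' i) (at x within S)"
    using assms unfolding differentiable_def by metis
  then show ?thesis unfolding differentiable_def by (blast intro: has_derivative_prod)
qed

lemma det_differentiable:
  fixes c :: "real \<Rightarrow> real mat"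
  assumes c: "\<And>s. c s \<in> carrier_mat n n"
    and d: "\<And>i j. i < n \<Longrightarrow> j < n \<Longrightarrow> (\<lambda>s. c s $$ (i, j)) differentiable (at 0)"
  shows "(\<lambda>s. det (c s)) differentiable (at 0)"
proof -
  have "(\<lambda>s. \<Prod>i = 0..<n. c s $$ (i, p i)) differentiable (at 0)" if "p permutes {0..<n}" for p
    using that by (intro differentiable_prod d) (auto simp: permutes_in_image)
  then have "(\<lambda>s. \<Sum>p\<in>{p. p permutes {0..<n}}. signof p * (\<Prod>i = 0..<n. c s $$ (i, p i)))
      differentiable (at 0)"
    by (intro differentiable_sum differentiable_mult) (auto simp: finite_permutations)
  then show ?thesis using det_def'[OF c] by simp
qed

lemma det_eventually_nonzero:
  assumes h: "has_mat_deriv n n c D" and d0: "det (c 0) \<noteq> 0"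
  shows "eventually (\<lambda>s. det (c s) \<noteq> 0) (nhds 0)"
proof -
  have "(\<lambda>s. det (c s)) differentiable (at 0)"
    using h det_differentiable has_mat_deriv_differentiable unfolding has_mat_deriv_def by blast
  then have "isCont (\<lambda>s. det (c s)) 0"
    using real_differentiable_def DERIV_isCont by blast
  then have "((\<lambda>s. det (c s)) \<longlongrightarrow> det (c 0)) (nhds 0)"
    unfolding isCont_def using tendsto_at_iff_tendsto_nhds by blast
  then show ?thesis using tendsto_imp_eventually_ne d0 by blast
qed

text \<open>The inverse is differentiated through the adjugate formula, which is polynomial in the entries
  and agrees with \<^const>\<open>minv\<close> near \<open>0\<close>.\<close>

lemma adj_mat_div_det_differentiable:
  assumes h: "has_mat_deriv n n c D" and d0: "det (c 0) \<noteq> 0"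
  shows "\<exists>D'. has_mat_deriv n n (\<lambda>s. (1 / det (c s)) \<cdot>\<^sub>m adj_mat (c s)) D'"
proof (rule differentiable_imp_has_mat_deriv)
  have c: "\<And>s. c s \<in> carrier_mat n n" using h unfolding has_mat_deriv_def by auto
  note dc = has_mat_deriv_differentiable[OF h]
  show "(1 / det (c s)) \<cdot>\<^sub>m adj_mat (c s) \<in> carrier_mat n n" for s using adj_mat(1)[OF c] by simp
  fix i j assume ij: "i < n" "j < n"
  have "(\<lambda>s. det (mat_delete (c s) j i)) differentiable (at 0)"
  proof (rule det_differentiable)
    show "mat_delete (c s) j i \<in> carrier_mat (n - 1) (n - 1)" for s using mat_delete_carrier[OF c] .
    show "(\<lambda>s. mat_delete (c s) j i $$ (i', j')) differentiable (at 0)"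
      if "i' < n - 1" "j' < n - 1" for i' j'
      using that carrier_matD[OF c] unfolding mat_delete_def by (auto intro!: dc)
  qed
  moreover have "((1 / det (c s)) \<cdot>\<^sub>m adj_mat (c s)) $$ (i, j) =
      (1 / det (c s)) * ((-1) ^ (j + i) * det (mat_delete (c s) j i))" for s
    using ij carrier_matD[OF c[of s]] by (auto simp: adj_mat_def cofactor_def)
  moreover have "(\<lambda>s. det (c s)) differentiable (at 0)" by (rule det_differentiable[OF c dc])
  ultimately show "(\<lambda>s. ((1 / det (c s)) \<cdot>\<^sub>m adj_mat (c s)) $$ (i, j)) differentiable (at 0)"
    using d0 by (auto intro!: differentiable_mult differentiable_divide)
qed

lemma has_mat_deriv_adj_inverse:
  assumes h: "has_mat_deriv n n c D" and d0: "det (c 0) \<noteq> 0"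
  shows "has_mat_deriv n n (\<lambda>s. (1 / det (c s)) \<cdot>\<^sub>m adj_mat (c s)) (- (minv (c 0) * D * minv (c 0)))"
proof -
  have c: "\<And>s. c s \<in> carrier_mat n n" and Dc: "D \<in> carrier_mat n n"
    using h unfolding has_mat_deriv_def by auto
  define N where "N = (\<lambda>s. (1 / det (c s)) \<cdot>\<^sub>m adj_mat (c s))"
  have Nc: "\<And>s. N s \<in> carrier_mat n n" unfolding N_def using adj_mat(1)[OF c] by simp
  have N0: "N 0 = minv (c 0)" unfolding N_def using minv_adj_mat[OF c d0] by simp
  obtain DN where hN: "has_mat_deriv n n N DN"
    using adj_mat_div_det_differentiable[OF h d0] unfolding N_def by blast
  have DNc: "DN \<in> carrier_mat n n" using hN unfolding has_mat_deriv_def by auto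
  have sum0: "D * N 0 + c 0 * DN = 0\<^sub>m n n"
  proof (rule has_mat_deriv_unique[OF has_mat_deriv_mult[OF h hN]])
    show "has_mat_deriv n n (\<lambda>s. 1\<^sub>m n) (0\<^sub>m n n)" unfolding has_mat_deriv_def by auto
    show "eventually (\<lambda>s. c s * N s = 1\<^sub>m n) (nhds 0)"
      using det_eventually_nonzero[OF h d0] by eventually_elim (simp add: N_def mult_adj_mat_div_det[OF c])
  qed
  have cDN: "c 0 * DN = - (D * N 0)"
  proof (rule eq_matI)
    fix i j assume "i < dim_row (- (D * N 0))" "j < dim_col (- (D * N 0))"
    then have ij: "i < n" "j < n" using Dc Nc[of 0] by auto
    have "(D * N 0 + c 0 * DN) $$ (i, j) = (D * N 0) $$ (i, j) + (c 0 * DN) $$ (i, j)"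
      by (rule index_add_mat(1)) (use ij Dc DNc c[of 0] in auto)
    moreover have "(- (D * N 0)) $$ (i, j) = - ((D * N 0) $$ (i, j))" using ij Dc Nc[of 0] by simp
    ultimately show "(c 0 * DN) $$ (i, j) = (- (D * N 0)) $$ (i, j)"
      using sum0 ij by simp
  qed (use Dc DNc c[of 0] Nc[of 0] in auto)
  have "DN = (N 0 * c 0) * DN" using minv_mat(3)[OF c d0] N0 DNc by simp
  also have "\<dots> = N 0 * (c 0 * DN)" using Nc[of 0] c[of 0] DNc by (rule assoc_mult_mat)
  also have "\<dots> = - (N 0 * D * N 0)"
    unfolding cDN using Nc[of 0] Dc by (simp add: assoc_mult_mat)
  finally show ?thesis using hN N0 unfolding N_def by simp
qed

lemma mat_curve_deriv_iff:
  assumes h: "has_mat_deriv nr nc c D" and ev: "eventually (\<lambda>s. c' s = c s) (nhds 0)"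
  shows "mat_curve_deriv c' W \<longleftrightarrow> W = D"
proof -
  have c0: "c' 0 = c 0" using eventually_nhds_x_imp_x[OF ev] .
  have cc: "c 0 \<in> carrier_mat nr nc" "D \<in> carrier_mat nr nc" using h unfolding has_mat_deriv_def by auto
  have ent: "((\<lambda>s. c' s $$ (i, j)) has_real_derivative d) (at 0) \<longleftrightarrow>
             ((\<lambda>s. c s $$ (i, j)) has_real_derivative d) (at 0)" for i j d
    by (rule DERIV_cong_ev) (use ev in \<open>auto elim: eventually_mono\<close>)
  have hd: "((\<lambda>s. c s $$ (i, j)) has_real_derivative D $$ (i, j)) (at 0)" if "i < nr" "j < nc" for i j
    using h that unfolding has_mat_deriv_def by auto
  show ?thesis
  proof
    assume m: "mat_curve_deriv c' W"
    then have dims: "dim_row W = nr" "dim_col W = nc" using c0 cc unfolding mat_curve_deriv_def by auto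
    show "W = D"
    proof (rule eq_matI)
      fix i j assume "i < dim_row D" "j < dim_col D"
      then have ij: "i < nr" "j < nc" using cc by auto
      have "((\<lambda>s. c s $$ (i, j)) has_real_derivative W $$ (i, j)) (at 0)"
        using m ij dims ent unfolding mat_curve_deriv_def by auto
      then show "W $$ (i, j) = D $$ (i, j)" using hd[OF ij] DERIV_unique by blast
    qed (use dims cc in auto)
  next
    assume "W = D"
    then show "mat_curve_deriv c' W" using c0 cc hd ent unfolding mat_curve_deriv_def by auto
  qed
qed

section \<open>The differential of the projection\<close>

text \<open>The product rule applied to \<open>Y\<^sub>4 - Y\<^sub>2\<^sup>T Y\<^sub>1\<^sup>-\<^sup>1 Y\<^sub>2\<close> in direction \<open>U\<close>.\<close>

definition schur_compl_deriv :: "nat \<Rightarrow> real mat \<Rightarrow> real mat \<Rightarrow> real mat" where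
  "schur_compl_deriv m Y U = lr_blk m U -
     ((transpose_mat (ur_blk m U) * minv (ul_blk m Y) +
       transpose_mat (ur_blk m Y) * (- (minv (ul_blk m Y) * ul_blk m U * minv (ul_blk m Y)))) * ur_blk m Y +
      transpose_mat (ur_blk m Y) * minv (ul_blk m Y) * ur_blk m U)"

lemma mat_curve_deriv_schur_compl_iff:
  assumes h: "has_mat_deriv (m + k) (m + k) c U" and d: "det (ul_blk m (c 0)) \<noteq> 0"
  shows "mat_curve_deriv
      (\<lambda>s. lr_blk m (c s) - transpose_mat (ur_blk m (c s)) * minv (ul_blk m (c s)) * ur_blk m (c s)) W
    \<longleftrightarrow> W = schur_compl_deriv m (c 0) U"
proof (rule mat_curve_deriv_iff)
  note b = has_mat_deriv_blks[OF h]
  define N where "N = (\<lambda>s. (1 / det (ul_blk m (c s))) \<cdot>\<^sub>m adj_mat (ul_blk m (c s)))"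
  have "ul_blk m (c 0) \<in> carrier_mat m m" using b(1) unfolding has_mat_deriv_def by simp
  then have N0: "N 0 = minv (ul_blk m (c 0))" unfolding N_def using minv_adj_mat[OF _ d] by simp
  show "has_mat_deriv k k (\<lambda>s. lr_blk m (c s) - transpose_mat (ur_blk m (c s)) * N s * ur_blk m (c s))
      (schur_compl_deriv m (c 0) U)"
    using has_mat_deriv_diff[OF b(3) has_mat_deriv_mult[OF has_mat_deriv_mult[OF
        has_mat_deriv_transpose[OF b(2)] has_mat_deriv_adj_inverse[OF b(1) d, folded N_def]] b(2)]]
    unfolding schur_compl_deriv_def N0 by simp
  show "eventually (\<lambda>s. lr_blk m (c s) - transpose_mat (ur_blk m (c s)) * minv (ul_blk m (c s)) * ur_blk m (c s) =
      lr_blk m (c s) - transpose_mat (ur_blk m (c s)) * N s * ur_blk m (c s)) (nhds 0)"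
    using det_eventually_nonzero[OF b(1) d]
  proof eventually_elim
    case (elim s)
    have "ul_blk m (c s) \<in> carrier_mat m m" using b(1) unfolding has_mat_deriv_def by auto
    then show ?case unfolding N_def using minv_adj_mat elim by metis
  qed
qed

lemma dproj_iff:
  assumes X: "X \<in> carrier_mat (m + k) (m + k)" and Y: "Y \<in> carrier_mat (m + k) (m + k)"
    and VX: "fst V \<in> carrier_mat (m + k) (m + k)" and VY: "snd V \<in> carrier_mat (m + k) (m + k)"
    and d: "det (ul_blk m Y) \<noteq> 0"
  shows "dproj m (X, Y) V W \<longleftrightarrow>
    W = ((ul_blk m (fst V), ul_blk m (snd V)), schur_compl_deriv m Y (snd V))"
proof -
  define cX where "cX = (\<lambda>s. X + s \<cdot>\<^sub>m fst V)"
  define cY where "cY = (\<lambda>s. Y + s \<cdot>\<^sub>m snd V)"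
  have hX: "has_mat_deriv (m + k) (m + k) cX (fst V)" unfolding cX_def by (rule has_mat_deriv_affine[OF X VX])
  have hY: "has_mat_deriv (m + k) (m + k) cY (snd V)" unfolding cY_def by (rule has_mat_deriv_affine[OF Y VY])
  have cY0: "cY 0 = Y" unfolding cY_def using Y VY by (intro eq_matI) auto
  have "mat_curve_deriv (\<lambda>s. fst (fst (proj m (cX s, cY s)))) (fst (fst W)) \<longleftrightarrow>
      fst (fst W) = ul_blk m (fst V)"
    by (rule mat_curve_deriv_iff[OF has_mat_deriv_blks(1)[OF hX]]) (auto simp: proj_eq_blks)
  moreover have "mat_curve_deriv (\<lambda>s. snd (fst (proj m (cX s, cY s)))) (snd (fst W)) \<longleftrightarrow>
      snd (fst W) = ul_blk m (snd V)"
    by (rule mat_curve_deriv_iff[OF has_mat_deriv_blks(1)[OF hY]]) (auto simp: proj_eq_blks)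
  moreover have "mat_curve_deriv (\<lambda>s. snd (proj m (cX s, cY s))) (snd W) \<longleftrightarrow>
      snd W = schur_compl_deriv m Y (snd V)"
    using mat_curve_deriv_schur_compl_iff[OF hY, unfolded cY0, OF d] unfolding proj_eq_blks cY0 by simp
  ultimately show ?thesis
    unfolding dproj_def Let_def cX_def cY_def by (cases W) auto
qed

section \<open>Block \<open>LDL\<^sup>T\<close> factorisation of a positive definite matrix\<close>

lemma posdef_congruence:
  assumes Y: "posdef n Y" and S: "S \<in> carrier_mat n n" and T: "T \<in> carrier_mat n n"
    and TS: "T * S = 1\<^sub>m n"
  shows "posdef n (transpose_mat S * Y * S)"
proof -
  have Yc: "Y \<in> carrier_mat n n" and Ys: "transpose_mat Y = Y"
    using Y unfolding posdef_def symmat_def by auto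
  have "transpose_mat (transpose_mat S * Y * S) = transpose_mat S * Y * S"
    using S Yc Ys by (simp add: mat_algebra_dims)
  moreover have "v \<bullet> ((transpose_mat S * Y * S) *\<^sub>v v) > 0"
    if v: "v \<in> carrier_vec n" "v \<noteq> 0\<^sub>v n" for v
  proof -
    have w: "S *\<^sub>v v \<in> carrier_vec n" using S v by simp
    have "T *\<^sub>v (S *\<^sub>v v) = v" using T S v TS by (simp flip: assoc_mult_mat_vec)
    then have "S *\<^sub>v v \<noteq> 0\<^sub>v n" using T v mult_mat_vec_zero[OF T] by auto
    then have "(S *\<^sub>v v) \<bullet> (Y *\<^sub>v (S *\<^sub>v v)) > 0" using Y w unfolding posdef_def by blast
    also have "(S *\<^sub>v v) \<bullet> (Y *\<^sub>v (S *\<^sub>v v)) = (transpose_mat S *\<^sub>v (Y *\<^sub>v (S *\<^sub>v v))) \<bullet> v"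
      using transpose_vec_mult_scalar[OF S v(1), of "Y *\<^sub>v (S *\<^sub>v v)"] Yc w
      by (simp add: comm_scalar_prod[of _ n])
    also have "\<dots> = v \<bullet> (transpose_mat S *\<^sub>v (Y *\<^sub>v (S *\<^sub>v v)))"
      using S Yc v by (simp add: comm_scalar_prod[of _ n])
    also have "transpose_mat S *\<^sub>v (Y *\<^sub>v (S *\<^sub>v v)) = (transpose_mat S * Y) *\<^sub>v (S *\<^sub>v v)"
      by (rule assoc_mult_mat_vec[symmetric]) (use S Yc w in auto)
    also have "\<dots> = (transpose_mat S * Y * S) *\<^sub>v v"
      by (rule assoc_mult_mat_vec[symmetric]) (use S Yc v in auto)
    finally show ?thesis .
  qed
  ultimately show ?thesis using S Yc unfolding posdef_def symmat_def by auto
qed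

lemma mult_inverse_cancel:
  fixes A :: "'a :: semiring_1 mat"
  assumes "A \<in> carrier_mat n n" "B \<in> carrier_mat n n" "A * B = 1\<^sub>m n" "X \<in> carrier_mat n p"
  shows "A * (B * X) = X"
  using assms by (simp add: left_mult_one_mat flip: assoc_mult_mat[of A n n B n X p])

text \<open>Equations with \<open>Y\<close> on the left, such as \<open>Y_factor\<close>, must not be used as rewrite rules from left
  to right: the locale constants \<open>L\<close>, \<open>Dg\<close>, \<dots> take \<open>Y\<close> as an argument, so rewriting loops.\<close>

locale posdef_blocks =
  fixes m k :: nat and Y :: "real mat"
  assumes posdef_Y: "posdef (m + k) Y"
begin

definition "Y1 = ul_blk m Y"
definition "Y2 = ur_blk m Y"
definition "Y4 = lr_blk m Y"
definition "N1 = minv Y1"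
definition "H = N1 * Y2"
definition "t = Y4 - transpose_mat Y2 * N1 * Y2"
definition "Nt = minv t"
definition "L = four_block_mat (1\<^sub>m m) H (0\<^sub>m k m) (1\<^sub>m k)"
definition "Linv = four_block_mat (1\<^sub>m m) (- H) (0\<^sub>m k m) (1\<^sub>m k)"
definition "Dg = four_block_mat Y1 (0\<^sub>m m k) (0\<^sub>m k m) t"
definition "Dginv = four_block_mat N1 (0\<^sub>m m k) (0\<^sub>m k m) Nt"

definition block_coords :: "real mat \<Rightarrow> real mat" where
  "block_coords U = transpose_mat Linv * U * Linv"

definition diag_lift :: "real mat \<Rightarrow> real mat \<Rightarrow> real mat" where
  "diag_lift P Q = transpose_mat L * four_block_mat P (0\<^sub>m m k) (0\<^sub>m k m) Q * L"

lemma Y_carrier: "Y \<in> carrier_mat (m + k) (m + k)" and Y_sym: "transpose_mat Y = Y"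
  using posdef_Y unfolding posdef_def symmat_def by auto

lemma Y_blks: "Y1 \<in> carrier_mat m m" "Y2 \<in> carrier_mat m k" "Y4 \<in> carrier_mat k k"
  unfolding Y1_def Y2_def Y4_def using blk_carrier_mat[OF Y_carrier] by auto

lemma Y_four_block: "Y = four_block_mat Y1 Y2 (transpose_mat Y2) Y4"
  using four_block_mat_blks_symmetric[OF Y_carrier Y_sym] unfolding Y1_def Y2_def Y4_def .

lemma N1: "N1 \<in> carrier_mat m m" "Y1 * N1 = 1\<^sub>m m" "N1 * Y1 = 1\<^sub>m m" "transpose_mat N1 = N1"
proof -
  have "posdef m Y1" unfolding Y1_def by (rule posdef_blks(1)[OF posdef_Y])
  then have "det Y1 \<noteq> 0" "transpose_mat Y1 = Y1"
    using posdef_det_nonzero unfolding posdef_def symmat_def by auto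
  then show "N1 \<in> carrier_mat m m" "Y1 * N1 = 1\<^sub>m m" "N1 * Y1 = 1\<^sub>m m" "transpose_mat N1 = N1"
    unfolding N1_def using minv_mat transpose_minv Y_blks(1) by auto
qed

lemma H_carrier: "H \<in> carrier_mat m k" unfolding H_def using N1 Y_blks by simp

lemma t_carrier: "t \<in> carrier_mat k k"
proof -
  have "transpose_mat Y2 * N1 * Y2 \<in> carrier_mat k k" using N1 Y_blks by simp
  then show ?thesis unfolding t_def by (rule minus_carrier_mat)
qed

lemmas carriers = Y_blks N1(1) H_carrier t_carrier
  carrier_matD[OF Y_blks(1)] carrier_matD[OF Y_blks(2)] carrier_matD[OF Y_blks(3)]
  carrier_matD[OF N1(1)] carrier_matD[OF H_carrier] carrier_matD[OF t_carrier]

lemmas mult_four_block_mat_blks = mult_four_block_mat[of _ m m _ k _ k _ _ m _ k]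

lemma L_carrier: "L \<in> carrier_mat (m + k) (m + k)" "Linv \<in> carrier_mat (m + k) (m + k)"
  unfolding L_def Linv_def using carriers by auto

lemma transpose_L: "transpose_mat L = four_block_mat (1\<^sub>m m) (0\<^sub>m m k) (transpose_mat H) (1\<^sub>m k)"
  unfolding L_def using carriers by (subst transpose_four_block_mat) auto

lemma transpose_Linv:
  "transpose_mat Linv = four_block_mat (1\<^sub>m m) (0\<^sub>m m k) (- transpose_mat H) (1\<^sub>m k)"
  unfolding Linv_def using carriers by (subst transpose_four_block_mat) (auto simp: transpose_uminus)

lemma L_Linv: "L * Linv = 1\<^sub>m (m + k)" "Linv * L = 1\<^sub>m (m + k)"
proof -
  have "H + - H = 0\<^sub>m m k" using H_carrier by (intro eq_matI) auto
  then show "L * Linv = 1\<^sub>m (m + k)" "Linv * L = 1\<^sub>m (m + k)"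
    unfolding L_def Linv_def using carriers by (subst mult_four_block_mat_blks; simp)+
qed

lemma Dg_carrier: "Dg \<in> carrier_mat (m + k) (m + k)"
  unfolding Dg_def using carriers by auto

lemma Y_factor: "Y = transpose_mat L * Dg * L"
proof -
  have "transpose_mat H * Y1 = transpose_mat Y2"
    unfolding H_def using carriers N1 by (simp add: transpose_mult assoc_mult_mat)
  then have "transpose_mat L * Dg = four_block_mat Y1 (0\<^sub>m m k) (transpose_mat Y2) t"
    unfolding transpose_L Dg_def using carriers by (subst mult_four_block_mat_blks) auto
  then have "transpose_mat L * Dg * L = four_block_mat Y1 (0\<^sub>m m k) (transpose_mat Y2) t * L"
    by simp
  also have "\<dots> = four_block_mat Y1 (Y1 * H) (transpose_mat Y2) (transpose_mat Y2 * H + t)"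
    unfolding L_def using carriers by (subst mult_four_block_mat_blks) auto
  also have "Y1 * H = Y2" unfolding H_def using carriers N1 by (simp flip: assoc_mult_mat)
  also have "transpose_mat Y2 * H + t = Y4"
  proof -
    have "transpose_mat Y2 * H = transpose_mat Y2 * N1 * Y2"
      unfolding H_def using carriers by (simp add: assoc_mult_mat)
    then show ?thesis unfolding t_def using carriers by (intro eq_matI) auto
  qed
  finally show ?thesis using Y_four_block by (rule trans[OF _ sym, rotated])
qed

lemma block_coords_Y: "block_coords Y = Dg"
proof -
  note Dc = Dg_carrier
  have "transpose_mat Linv * (transpose_mat L * Dg * L) * Linv =
      transpose_mat (L * Linv) * Dg * (L * Linv)"
    using L_carrier Dc by (simp add: mat_algebra_dims)
  then show ?thesis unfolding block_coords_def using Y_factor L_Linv L_carrier Dc by simp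
qed

lemma Nt: "Nt \<in> carrier_mat k k" "t * Nt = 1\<^sub>m k" "Nt * t = 1\<^sub>m k" "transpose_mat Nt = Nt"
proof -
  have "posdef (m + k) (transpose_mat Linv * Y * Linv)"
    using posdef_congruence[OF posdef_Y L_carrier(2,1) L_Linv(1)] .
  then have "posdef k (lr_blk m Dg)"
    using posdef_blks(2) block_coords_Y unfolding block_coords_def by metis
  moreover have "lr_blk m Dg = t"
    unfolding Dg_def by (rule blks_four_block_mat(4)) (use carriers in auto)
  ultimately have "posdef k t" by simp
  then have "det t \<noteq> 0" "transpose_mat t = t"
    using posdef_det_nonzero unfolding posdef_def symmat_def by auto
  then show "Nt \<in> carrier_mat k k" "t * Nt = 1\<^sub>m k" "Nt * t = 1\<^sub>m k" "transpose_mat Nt = Nt"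
    unfolding Nt_def using minv_mat transpose_minv t_carrier by auto
qed

lemma Dginv_carrier: "Dginv \<in> carrier_mat (m + k) (m + k)"
  unfolding Dginv_def using N1 Nt by auto

lemma minv_Y: "minv Y = Linv * Dginv * transpose_mat Linv"
proof (rule minv_eqI[OF Y_carrier])
  note c = L_carrier Dg_carrier Dginv_carrier
  have DD: "Dg * Dginv = 1\<^sub>m (m + k)"
    unfolding Dg_def Dginv_def using carriers N1 Nt by (subst mult_four_block_mat_blks) auto
  have LL: "transpose_mat L * transpose_mat Linv = 1\<^sub>m (m + k)"
    using arg_cong[OF L_Linv(2), of transpose_mat] L_carrier by (simp add: transpose_mult)
  have "transpose_mat L * Dg * L * (Linv * Dginv * transpose_mat Linv) =
      transpose_mat L * (Dg * (L * (Linv * (Dginv * transpose_mat Linv))))"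
    using c by (simp add: assoc_mult_mat_dims)
  also have "L * (Linv * (Dginv * transpose_mat Linv)) = Dginv * transpose_mat Linv"
    using c by (intro mult_inverse_cancel[OF _ _ L_Linv(1)]) auto
  also have "Dg * (Dginv * transpose_mat Linv) = transpose_mat Linv"
    using c by (intro mult_inverse_cancel[OF _ _ DD]) auto
  finally have "transpose_mat L * Dg * L * (Linv * Dginv * transpose_mat Linv) = 1\<^sub>m (m + k)"
    using LL by simp
  then show "Y * (Linv * Dginv * transpose_mat Linv) = 1\<^sub>m (m + k)"
    by (simp only: Y_factor[symmetric])
  show "Linv * Dginv * transpose_mat Linv \<in> carrier_mat (m + k) (m + k)" using c by simp
qed

end

section \<open>Nonnegativity of \<open>tr (P M)\<close> for positive semidefinite \<open>P\<close> and \<open>M\<close>\<close>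

definition quad_form :: "nat \<Rightarrow> (nat \<Rightarrow> nat \<Rightarrow> real) \<Rightarrow> (nat \<Rightarrow> real) \<Rightarrow> real" where
  "quad_form n P x = (\<Sum>i<n. \<Sum>j<n. x i * P i j * x j)"

definition psd_form :: "nat \<Rightarrow> (nat \<Rightarrow> nat \<Rightarrow> real) \<Rightarrow> bool" where
  "psd_form n P \<longleftrightarrow> (\<forall>i<n. \<forall>j<n. P i j = P j i) \<and> (\<forall>x. quad_form n P x \<ge> 0)"

definition trace_prod :: "nat \<Rightarrow> (nat \<Rightarrow> nat \<Rightarrow> real) \<Rightarrow> (nat \<Rightarrow> nat \<Rightarrow> real) \<Rightarrow> real" where
  "trace_prod n P M = (\<Sum>i<n. \<Sum>j<n. P i j * M j i)"

lemma sum_two_deltas: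
  fixes a b :: real and n r q :: nat
  assumes "r < n" "q < n"
  shows "(\<Sum>j<n. (a * (if j = r then 1 else 0) + b * (if j = q then 1 else 0)) * f j) = a * f r + b * f q"
proof -
  have "(a * (if j = r then 1 else 0) + b * (if j = q then 1 else 0)) * f j =
      (if j = r then a * f j else 0) + (if j = q then b * f j else 0)" for j
    by (simp add: algebra_simps)
  then have "(\<Sum>j<n. (a * (if j = r then 1 else 0) + b * (if j = q then 1 else 0)) * f j) =
      (\<Sum>j<n. (if j = r then a * f j else 0)) + (\<Sum>j<n. (if j = q then b * f j else 0))"
    by (simp add: sum.distrib)
  also have "\<dots> = a * f r + b * f q" using assms by (simp add: sum.delta)
  finally show ?thesis .
qed

lemma quad_form_two_deltas:
  fixes a b :: real and n r q :: nat
  assumes "r < n" "q < n"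
  shows "quad_form n P (\<lambda>i. a * (if i = r then 1 else 0) + b * (if i = q then 1 else 0)) =
    a * (a * P r r + b * P r q) + b * (a * P q r + b * P q q)"
proof -
  let ?x = "\<lambda>i. a * (if i = r then 1 else 0) + b * (if i = q then 1 else 0)"
  have "quad_form n P ?x = (\<Sum>i<n. ?x i * (\<Sum>j<n. ?x j * P i j))"
    unfolding quad_form_def by (auto intro!: sum.cong simp: sum_distrib_left mult_ac)
  also have "\<dots> = (\<Sum>i<n. ?x i * (a * P i r + b * P i q))"
    using sum_two_deltas[OF assms, of a b] by (simp add: mult.commute)
  also have "\<dots> = a * (a * P r r + b * P r q) + b * (a * P q r + b * P q q)"
    using sum_two_deltas[OF assms, of a b "\<lambda>i. a * P i r + b * P i q"] by simp
  finally show ?thesis .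
qed

lemma quad_form_shift:
  assumes "r < n"
  shows "quad_form n P (\<lambda>i. x i - c * (if i = r then 1 else 0)) =
    quad_form n P x - c * (\<Sum>j<n. P r j * x j) - c * (\<Sum>i<n. x i * P i r) + c * c * P r r"
proof -
  let ?d = "\<lambda>i. (if i = r then 1 else 0) :: real"
  have delta_mult: "?d i * z = (if i = r then z else 0)" for i z by simp
  have sum_if: "(\<Sum>j\<in>A. if b then f j else 0) = (if b then sum f A else (0::real))" for b f A
    by (cases b) auto
  have e: "(x i - c * ?d i) * P i j * (x j - c * ?d j) =
     x i * P i j * x j - c * (?d i * (P i j * x j)) - c * (?d j * (x i * P i j)) + c * c * (?d i * (?d j * P i j))"
    for i j by (simp add: algebra_simps)
  have "quad_form n P (\<lambda>i. x i - c * ?d i) =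
     quad_form n P x - c * (\<Sum>i<n. \<Sum>j<n. ?d i * (P i j * x j))
     - c * (\<Sum>i<n. \<Sum>j<n. ?d j * (x i * P i j)) + c * c * (\<Sum>i<n. \<Sum>j<n. ?d i * (?d j * P i j))"
    unfolding quad_form_def e by (simp add: sum.distrib sum_subtractf sum_distrib_left)
  also have "(\<Sum>i<n. \<Sum>j<n. ?d i * (P i j * x j)) = (\<Sum>j<n. P r j * x j)"
    using assms by (simp add: delta_mult sum_if sum.delta)
  also have "(\<Sum>i<n. \<Sum>j<n. ?d j * (x i * P i j)) = (\<Sum>i<n. x i * P i r)"
    using assms by (simp add: delta_mult sum_if sum.delta)
  also have "(\<Sum>i<n. \<Sum>j<n. ?d i * (?d j * P i j)) = P r r"
    using assms by (simp add: delta_mult sum_if sum.delta)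
  finally show ?thesis .
qed

lemma psd_form_diag:
  assumes psd: "psd_form n P" and r: "r < n"
  shows "P r r \<ge> 0"
proof -
  let ?x = "\<lambda>i. 1 * (if i = r then 1 else 0) + 0 * (if i = r then 1 else (0::real))"
  have "quad_form n P ?x \<ge> 0" using psd unfolding psd_form_def by blast
  then show ?thesis using quad_form_two_deltas[OF r r, of P 1 0] by simp
qed

lemma psd_form_zero_diag_row:
  assumes psd: "psd_form n P" and r: "r < n" and j: "j < n" and z: "P r r = 0"
  shows "P r j = 0"
proof (rule ccontr)
  assume nz: "P r j \<noteq> 0"
  define s where "s = - (P j j + 1) / (2 * P r j)"
  let ?x = "\<lambda>i. s * (if i = r then 1 else 0) + 1 * (if i = j then 1 else (0::real))"
  have "quad_form n P ?x = s * (s * P r r + 1 * P r j) + 1 * (s * P j r + 1 * P j j)"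
    by (rule quad_form_two_deltas[OF r j])
  also have "\<dots> = 2 * s * P r j + P j j" using psd z r j unfolding psd_form_def by (simp add: algebra_simps)
  also have "\<dots> = -1" unfolding s_def using nz by (simp add: field_simps)
  finally have "quad_form n P ?x = -1" .
  moreover have "quad_form n P ?x \<ge> 0" using psd unfolding psd_form_def by blast
  ultimately show False by simp
qed

lemma psd_form_eliminate:
  assumes psd: "psd_form n P" and r: "r < n" and p: "P r r > 0"
  shows "psd_form n (\<lambda>i j. P i j - P i r * P r j / P r r)"
proof -
  have sym: "\<forall>i<n. \<forall>j<n. P i j = P j i" using psd unfolding psd_form_def by blast
  have "quad_form n (\<lambda>i j. P i j - P i r * P r j / P r r) x \<ge> 0" for x
  proof -
    define S where "S = (\<Sum>j<n. P r j * x j)"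
    have S': "(\<Sum>i<n. x i * P i r) = S" unfolding S_def using sym r by (auto intro!: sum.cong simp: mult.commute)
    have "quad_form n (\<lambda>i j. P i j - P i r * P r j / P r r) x =
        quad_form n P x - (\<Sum>i<n. \<Sum>j<n. (x i * P i r) * (P r j * x j)) / P r r"
      unfolding quad_form_def by (simp add: algebra_simps sum_subtractf sum_divide_distrib)
    also have "(\<Sum>i<n. \<Sum>j<n. (x i * P i r) * (P r j * x j)) = (\<Sum>i<n. x i * P i r) * S"
      unfolding S_def by (simp add: sum_product)
    also have "quad_form n P x - (\<Sum>i<n. x i * P i r) * S / P r r = quad_form n P x - S * S / P r r"
      using S' by simp
    also have "quad_form n P x - S * S / P r r =
        quad_form n P (\<lambda>i. x i - (S / P r r) * (if i = r then 1 else 0))"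
    proof -
      have "quad_form n P (\<lambda>i. x i - (S / P r r) * (if i = r then 1 else 0)) =
          quad_form n P x - (S / P r r) * S - (S / P r r) * S + (S / P r r) * (S / P r r) * P r r"
        using quad_form_shift[OF r, of P x "S / P r r"] S' unfolding S_def by simp
      also have "\<dots> = quad_form n P x - S * S / P r r" using p by (simp add: field_simps)
      finally show ?thesis by simp
    qed
    finally show ?thesis using psd unfolding psd_form_def by presburger
  qed
  then show ?thesis using sym r unfolding psd_form_def by (auto simp: mult.commute)
qed

text \<open>Eliminating row \<open>r\<close> splits \<open>trace_prod n P M\<close> into the trace for the eliminated form and
  \<open>quad_form n M u / P r r \<ge> 0\<close>; after \<open>n\<close> steps the form is zero.\<close>

lemma trace_prod_nonneg_vanishing_prefix:
  assumes M: "\<And>x. quad_form n M x \<ge> 0" and "r \<le> n"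
  shows "psd_form n P \<Longrightarrow> (\<forall>i<n. \<forall>j<n. i < r \<or> j < r \<longrightarrow> P i j = 0) \<Longrightarrow> trace_prod n P M \<ge> 0"
  using \<open>r \<le> n\<close>
proof (induction r arbitrary: P rule: inc_induct)
  case base
  then show ?case unfolding trace_prod_def by simp
next
  case (step r)
  have r: "r < n" using step by simp
  have sym: "\<forall>i<n. \<forall>j<n. P i j = P j i" using step.prems unfolding psd_form_def by blast
  show ?case
  proof (cases "P r r = 0")
    case True
    have "P i j = 0" if ij: "i < n" "j < n" "i < Suc r \<or> j < Suc r" for i j
    proof -
      consider "i < r \<or> j < r" | "i = r" | "j = r" using ij(3) by linarith
      then show ?thesis
        using step.prems(2) psd_form_zero_diag_row[OF step.prems(1) r _ True] sym ij(1,2) r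
        by cases auto
    qed
    then show ?thesis using step.IH step.prems(1) by simp
  next
    case False
    then have p: "P r r > 0" using psd_form_diag[OF step.prems(1) r] by simp
    define u where "u i = P i r" for i
    let ?P' = "\<lambda>i j. P i j - P i r * P r j / P r r"
    have "\<forall>i<n. \<forall>j<n. i < Suc r \<or> j < Suc r \<longrightarrow> ?P' i j = 0"
      using step.prems(2) sym p r by (auto simp: less_Suc_eq)
    then have "trace_prod n ?P' M \<ge> 0" using step.IH psd_form_eliminate[OF step.prems(1) r p] by blast
    moreover have "trace_prod n P M = trace_prod n ?P' M + (\<Sum>i<n. \<Sum>j<n. P i r * P r j * M j i) / P r r"
      unfolding trace_prod_def by (simp add: algebra_simps sum_subtractf sum_divide_distrib sum.distrib)
    moreover have "(\<Sum>i<n. \<Sum>j<n. P i r * P r j * M j i) = quad_form n M u"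
    proof -
      have "(\<Sum>i<n. \<Sum>j<n. P i r * P r j * M j i) = (\<Sum>i<n. \<Sum>j<n. u j * M j i * u i)"
        unfolding u_def using sym r by (auto intro!: sum.cong simp: mult_ac)
      also have "\<dots> = quad_form n M u" unfolding quad_form_def by (rule sum.swap)
      finally show ?thesis .
    qed
    ultimately show ?thesis using M[of u] p by simp
  qed
qed

lemma trace_prod_nonneg:
  assumes "\<And>x. quad_form n M x \<ge> 0" "psd_form n P"
  shows "trace_prod n P M \<ge> 0"
  using trace_prod_nonneg_vanishing_prefix[OF assms(1) le0 assms(2)] by simp

lemma scalar_prod_mult_mat_vec_quad_form:
  assumes "P \<in> carrier_mat n n"
  shows "vec n x \<bullet> (P *\<^sub>v vec n x) = quad_form n (\<lambda>i j. P $$ (i, j)) x"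
proof -
  have "vec n x \<bullet> (P *\<^sub>v vec n x) = (\<Sum>i<n. x i * (\<Sum>j<n. P $$ (i, j) * x j))"
    using assms by (auto intro!: sum.cong simp: atLeast0LessThan scalar_prod_def)
  also have "\<dots> = quad_form n (\<lambda>i j. P $$ (i, j)) x"
    unfolding quad_form_def by (auto intro!: sum.cong simp: sum_distrib_left mult_ac)
  finally show ?thesis .
qed

lemma mtr_mult_psd_nonneg:
  assumes P: "P \<in> carrier_mat n n" and Ps: "transpose_mat P = P"
    and Pp: "\<And>v. v \<in> carrier_vec n \<Longrightarrow> v \<bullet> (P *\<^sub>v v) \<ge> 0"
    and M: "M \<in> carrier_mat n n" and Mp: "\<And>v. v \<in> carrier_vec n \<Longrightarrow> v \<bullet> (M *\<^sub>v v) \<ge> 0"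
  shows "mtr (P * M) \<ge> 0"
proof -
  have "psd_form n (\<lambda>i j. P $$ (i, j))"
    unfolding psd_form_def using Pp[of "vec n _"] scalar_prod_mult_mat_vec_quad_form[OF P] P Ps
    by (metis carrier_matD(1,2) index_transpose_mat(1) vec_carrier)
  then have "trace_prod n (\<lambda>i j. P $$ (i, j)) (\<lambda>i j. M $$ (i, j)) \<ge> 0"
    using Mp[of "vec n _"] scalar_prod_mult_mat_vec_quad_form[OF M] by (intro trace_prod_nonneg) auto
  then show ?thesis unfolding mtr_mult[OF P M] trace_prod_def .
qed

lemma posdef_minv_nonneg:
  assumes Y: "posdef n Y" and v: "v \<in> carrier_vec n"
  shows "v \<bullet> (minv Y *\<^sub>v v) \<ge> 0"
proof -
  have Yc: "Y \<in> carrier_mat n n" and Ys: "transpose_mat Y = Y"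
    using Y unfolding posdef_def symmat_def by auto
  note Yi = minv_mat[OF Yc posdef_det_nonzero[OF Y]]
  define w where "w = minv Y *\<^sub>v v"
  have wc: "w \<in> carrier_vec n" unfolding w_def using Yi v by simp
  have "Y *\<^sub>v w = v" unfolding w_def using Yc Yi v by (simp flip: assoc_mult_mat_vec)
  then have "v \<bullet> w = w \<bullet> (Y *\<^sub>v w)"
    using transpose_vec_mult_scalar[OF Yc wc wc] Ys by simp
  moreover have "w \<bullet> (Y *\<^sub>v w) \<ge> 0"
    using Y wc Yc unfolding posdef_def by (cases "w = 0\<^sub>v n") (auto intro: less_imp_le)
  ultimately show ?thesis unfolding w_def by simp
qed

lemma mtr_minv_square_nonneg:
  assumes Y: "posdef n Y" and A: "A \<in> carrier_mat n n" and As: "transpose_mat A = A"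
  shows "mtr (minv Y * A * minv Y * A) \<ge> 0"
proof -
  have Yc: "Y \<in> carrier_mat n n" and Ys: "transpose_mat Y = Y"
    using Y unfolding posdef_def symmat_def by auto
  note Yi = minv_mat[OF Yc posdef_det_nonzero[OF Y]] transpose_minv[OF Yc posdef_det_nonzero[OF Y] Ys]
  have "v \<bullet> ((A * minv Y * A) *\<^sub>v v) \<ge> 0" if v: "v \<in> carrier_vec n" for v
  proof -
    have "(A * minv Y * A) *\<^sub>v v = (A * minv Y) *\<^sub>v (A *\<^sub>v v)"
      by (rule assoc_mult_mat_vec) (use A Yi v in auto)
    also have "\<dots> = A *\<^sub>v (minv Y *\<^sub>v (A *\<^sub>v v))"
      by (rule assoc_mult_mat_vec) (use A Yi v in auto)
    finally have "(A * minv Y * A) *\<^sub>v v = A *\<^sub>v (minv Y *\<^sub>v (A *\<^sub>v v))" .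
    moreover have "v \<bullet> (A *\<^sub>v (minv Y *\<^sub>v (A *\<^sub>v v))) = (A *\<^sub>v v) \<bullet> (minv Y *\<^sub>v (A *\<^sub>v v))"
      using transpose_vec_mult_scalar[OF A, of "minv Y *\<^sub>v (A *\<^sub>v v)" v] A As Yi v by simp
    ultimately show ?thesis using posdef_minv_nonneg[OF Y, of "A *\<^sub>v v"] A v by simp
  qed
  then have "mtr (minv Y * (A * minv Y * A)) \<ge> 0"
    using posdef_minv_nonneg[OF Y] by (intro mtr_mult_psd_nonneg[OF Yi(1) Yi(4)]) (use A Yi in auto)
  moreover have "minv Y * A * minv Y * A = minv Y * (A * minv Y * A)"
    using carrier_matD[OF A] carrier_matD[OF Yi(1)] by (simp add: assoc_mult_mat_dims)
  ultimately show ?thesis by simp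
qed

section \<open>The metric in block coordinates\<close>

lemma mtr_four_block_diag_mult:
  assumes A: "A \<in> carrier_mat m m" and D: "D \<in> carrier_mat k k" and Z: "Z \<in> carrier_mat (m + k) (m + k)"
  shows "mtr (four_block_mat A (0\<^sub>m m k) (0\<^sub>m k m) D * Z) = mtr (A * ul_blk m Z) + mtr (D * lr_blk m Z)"
proof -
  note c = blk_carrier_mat[OF Z]
  have "four_block_mat A (0\<^sub>m m k) (0\<^sub>m k m) D * Z =
      four_block_mat (A * ul_blk m Z) (A * ur_blk m Z) (D * ll_blk m Z) (D * lr_blk m Z)"
    using A D c by (subst four_block_mat_blks[OF Z], subst mult_four_block_mat[of _ m m _ k _ k _ _ m _ k]) auto
  then show ?thesis using A D c by (simp add: mtr_four_block_mat[of _ m _ k])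
qed

context posdef_blocks
begin

lemma block_coords_carrier: "U \<in> carrier_mat (m + k) (m + k) \<Longrightarrow> block_coords U \<in> carrier_mat (m + k) (m + k)"
  unfolding block_coords_def using L_carrier by simp

lemma schur_compl_deriv_eq:
  assumes U: "U \<in> carrier_mat (m + k) (m + k)"
  shows "schur_compl_deriv m Y U = lr_blk m U - transpose_mat (ur_blk m U) * H - transpose_mat H * ur_blk m U
     + transpose_mat H * ul_blk m U * H"
proof -
  note d = carrier_matD[OF blk_carrier_mat(1)[OF U]] carrier_matD[OF blk_carrier_mat(2)[OF U]]
    carrier_matD[OF blk_carrier_mat(4)[OF U]]
  have HT: "transpose_mat H = transpose_mat Y2 * N1" unfolding H_def using carriers N1 by (simp add: transpose_mult)
  have "schur_compl_deriv m Y U = lr_blk m U - ((transpose_mat (ur_blk m U) * N1 +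
      transpose_mat Y2 * (- (N1 * ul_blk m U * N1))) * Y2 + transpose_mat Y2 * N1 * ur_blk m U)"
    unfolding schur_compl_deriv_def Y1_def[symmetric] Y2_def[symmetric] N1_def[symmetric] ..
  also have "\<dots> = lr_blk m U - ((transpose_mat (ur_blk m U) * (N1 * Y2) +
      - (transpose_mat Y2 * (N1 * (ul_blk m U * (N1 * Y2))))) + transpose_mat Y2 * (N1 * ur_blk m U))"
    using carriers d by (simp add: mat_algebra_dims)
  also have "\<dots> = lr_blk m U - transpose_mat (ur_blk m U) * H - transpose_mat H * ur_blk m U
     + transpose_mat H * ul_blk m U * H"
    unfolding HT H_def using carriers d by (simp add: mat_algebra_dims N1(4)) (intro eq_matI, auto)
  finally show ?thesis .
qed

lemma block_coords_blks:
  assumes U: "U \<in> carrier_mat (m + k) (m + k)" and Us: "transpose_mat U = U"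
  shows "ul_blk m (block_coords U) = ul_blk m U" "lr_blk m (block_coords U) = schur_compl_deriv m Y U"
proof -
  define U1 U2 U4 where "U1 = ul_blk m U" "U2 = ur_blk m U" "U4 = lr_blk m U"
  have Uc: "U1 \<in> carrier_mat m m" "U2 \<in> carrier_mat m k" "U4 \<in> carrier_mat k k"
    unfolding U1_U2_U4_def using blk_carrier_mat[OF U] by auto
  have Us': "U = four_block_mat U1 U2 (transpose_mat U2) U4"
    using four_block_mat_blks_symmetric[OF U Us] unfolding U1_U2_U4_def .
  have "transpose_mat Linv * U = four_block_mat U1 U2 (- transpose_mat H * U1 + transpose_mat U2)
      (- transpose_mat H * U2 + U4)"
    unfolding transpose_Linv by (subst Us', subst mult_four_block_mat_blks) (use Uc carriers in auto)
  then have bc: "block_coords U = four_block_mat U1 (U1 * - H + U2)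
      ((- transpose_mat H * U1 + transpose_mat U2) * 1\<^sub>m m)
      ((- transpose_mat H * U1 + transpose_mat U2) * - H + (- transpose_mat H * U2 + U4))"
    unfolding block_coords_def Linv_def using Uc carriers by (simp, subst mult_four_block_mat_blks) auto
  show "ul_blk m (block_coords U) = ul_blk m U"
    unfolding bc using Uc carriers by (subst blks_four_block_mat) (auto simp: U1_U2_U4_def)
  have "lr_blk m (block_coords U) =
      (- transpose_mat H * U1 + transpose_mat U2) * - H + (- transpose_mat H * U2 + U4)"
    unfolding bc using Uc carriers by (subst blks_four_block_mat) auto
  also have "\<dots> = schur_compl_deriv m Y U"
    unfolding schur_compl_deriv_eq[OF U] U1_U2_U4_def[symmetric]
    using carrier_matD[OF Uc(1)] carrier_matD[OF Uc(2)] carrier_matD[OF Uc(3)] carriers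
    by (simp add: mat_algebra_dims) (intro eq_matI, auto)
  finally show "lr_blk m (block_coords U) = schur_compl_deriv m Y U" .
qed

lemma block_coords_symmetric:
  "U \<in> carrier_mat (m + k) (m + k) \<Longrightarrow> transpose_mat U = U \<Longrightarrow> transpose_mat (block_coords U) = block_coords U"
  unfolding block_coords_def using L_carrier by (simp add: mat_algebra_dims)

lemma schur_compl_deriv_symmetric:
  assumes "U \<in> carrier_mat (m + k) (m + k)" "transpose_mat U = U"
  shows "transpose_mat (schur_compl_deriv m Y U) = schur_compl_deriv m Y U"
  using blks_symmetric(3)[OF block_coords_carrier block_coords_symmetric] block_coords_blks assms by metis

lemma block_coords_minus:
  "A \<in> carrier_mat (m + k) (m + k) \<Longrightarrow> B \<in> carrier_mat (m + k) (m + k) \<Longrightarrow>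
     block_coords (A - B) = block_coords A - block_coords B"
  unfolding block_coords_def using L_carrier by (simp add: mat_algebra_dims)

lemma diag_lift_carrier:
  "P \<in> carrier_mat m m \<Longrightarrow> Q \<in> carrier_mat k k \<Longrightarrow> diag_lift P Q \<in> carrier_mat (m + k) (m + k)"
  unfolding diag_lift_def using L_carrier by auto

lemma diag_lift_symmetric:
  assumes "P \<in> carrier_mat m m" "Q \<in> carrier_mat k k" "transpose_mat P = P" "transpose_mat Q = Q"
  shows "transpose_mat (diag_lift P Q) = diag_lift P Q"
proof -
  have "transpose_mat (four_block_mat P (0\<^sub>m m k) (0\<^sub>m k m) Q) = four_block_mat P (0\<^sub>m m k) (0\<^sub>m k m) Q"
    using assms by (subst transpose_four_block_mat) auto
  then show ?thesis unfolding diag_lift_def using L_carrier assms by (simp add: mat_algebra_dims)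
qed

lemma block_coords_diag_lift:
  assumes "P \<in> carrier_mat m m" "Q \<in> carrier_mat k k"
  shows "block_coords (diag_lift P Q) = four_block_mat P (0\<^sub>m m k) (0\<^sub>m k m) Q"
proof -
  let ?G = "four_block_mat P (0\<^sub>m m k) (0\<^sub>m k m) Q"
  have G: "?G \<in> carrier_mat (m + k) (m + k)" using assms by auto
  have "transpose_mat L * transpose_mat Linv = 1\<^sub>m (m + k)"
    using arg_cong[OF L_Linv(2), of transpose_mat] L_carrier by (simp add: transpose_mult)
  then have "transpose_mat Linv * transpose_mat L * ?G * (L * Linv) = ?G"
    using arg_cong[OF L_Linv(1), of transpose_mat] L_carrier G carrier_matD[OF G]
    by (simp add: L_Linv transpose_mult[symmetric])
  then show ?thesis unfolding block_coords_def diag_lift_def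
    using carrier_matD[OF L_carrier(1)] carrier_matD[OF L_carrier(2)] carrier_matD[OF G]
    by (simp add: mat_algebra_dims)
qed

lemma diag_lift_blks:
  assumes "P \<in> carrier_mat m m" "Q \<in> carrier_mat k k" "transpose_mat P = P" "transpose_mat Q = Q"
  shows "ul_blk m (diag_lift P Q) = P" "schur_compl_deriv m Y (diag_lift P Q) = Q"
  using block_coords_blks[OF diag_lift_carrier diag_lift_symmetric] block_coords_diag_lift
    blks_four_block_mat assms by (metis zero_carrier_mat)+

lemma schur_compl_deriv_minus:
  assumes "A \<in> carrier_mat (m + k) (m + k)" "transpose_mat A = A"
    and "B \<in> carrier_mat (m + k) (m + k)" "transpose_mat B = B"
  shows "schur_compl_deriv m Y (A - B) = schur_compl_deriv m Y A - schur_compl_deriv m Y B"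
proof -
  have "transpose_mat (A - B) = A - B" using assms by (simp add: transpose_minus)
  then show ?thesis
    using block_coords_blks(2) block_coords_minus blk_minus(2) block_coords_carrier assms
    by (metis minus_carrier_mat)
qed

lemma mtr_minv_Y_sandwich:
  assumes "A \<in> carrier_mat (m + k) (m + k)" "B \<in> carrier_mat (m + k) (m + k)"
  shows "mtr (minv Y * A * minv Y * B) = mtr (Dginv * block_coords A * Dginv * block_coords B)"
proof -
  note c = L_carrier Dginv_carrier assms
  have "minv Y * A * minv Y * B = Linv * (Dginv * block_coords A * Dginv * (transpose_mat Linv * B))"
    unfolding minv_Y block_coords_def using c by (simp add: assoc_mult_mat_dims)
  moreover have "Dginv * block_coords A * Dginv * (transpose_mat Linv * B) \<in> carrier_mat (m + k) (m + k)"
    using c by (intro mult_carrier_mat[of _ _ "m + k"] block_coords_carrier) auto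
  ultimately have "mtr (minv Y * A * minv Y * B) =
      mtr (Dginv * block_coords A * Dginv * (transpose_mat Linv * B) * Linv)"
    using mtr_mult_comm[OF L_carrier(2)] by simp
  then show ?thesis unfolding block_coords_def using c by (simp add: assoc_mult_mat_dims)
qed

lemma mtr_minv_Y_diag_lift:
  assumes U: "U \<in> carrier_mat (m + k) (m + k)" "transpose_mat U = U"
    and P: "P \<in> carrier_mat m m" and Q: "Q \<in> carrier_mat k k"
  shows "mtr (minv Y * diag_lift P Q * minv Y * U) =
    mtr (N1 * P * N1 * ul_blk m U) + mtr (Nt * Q * Nt * schur_compl_deriv m Y U)"
proof -
  have "Dginv * block_coords (diag_lift P Q) * Dginv =
      four_block_mat (N1 * P * N1) (0\<^sub>m m k) (0\<^sub>m k m) (Nt * Q * Nt)"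
    unfolding block_coords_diag_lift[OF P Q] Dginv_def using N1 Nt P Q
    by (subst mult_four_block_mat_blks, auto, subst mult_four_block_mat_blks, auto)
  then show ?thesis
    unfolding mtr_minv_Y_sandwich[OF diag_lift_carrier[OF P Q] U(1)]
    using mtr_four_block_diag_mult[OF _ _ block_coords_carrier[OF U(1)], of "N1 * P * N1" "Nt * Q * Nt"]
      block_coords_blks[OF U] N1 Nt P Q
    by (simp add: assoc_mult_mat_dims)
qed

end

lemma wp_inner_eq:
  "wp_inner Y V W = (mtr (minv Y * fst V * minv Y * fst W) + mtr (minv Y * snd V * minv Y * snd W)) / 2"
  unfolding wp_inner_def Let_def ..

lemma wp_inner_nonneg:
  assumes "posdef n Y" "symmat n (fst K)" "symmat n (snd K)"
  shows "wp_inner Y K K \<ge> 0"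
  using mtr_minv_square_nonneg[OF assms(1)] assms(2,3) unfolding wp_inner_eq symmat_def by simp

lemma mtr_sandwich_add:
  assumes "M \<in> carrier_mat n n" "A \<in> carrier_mat n n" "B \<in> carrier_mat n n" "C \<in> carrier_mat n n"
  shows "mtr (M * (A + B) * M * C) = mtr (M * A * M * C) + mtr (M * B * M * C)"
proof -
  have "M * (A + B) * M * C = M * A * M * C + M * B * M * C"
    using assms by (simp add: mat_algebra_dims)
  moreover have "M * A * M * C \<in> carrier_mat n n" "M * B * M * C \<in> carrier_mat n n"
    using assms by (auto intro!: mult_carrier_mat[of _ n n _ n])
  ultimately show ?thesis using mtr_add by simp
qed

lemma mtr_sandwich_swap:
  assumes "M \<in> carrier_mat n n" "A \<in> carrier_mat n n" "B \<in> carrier_mat n n"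
  shows "mtr (M * A * M * B) = mtr (M * B * M * A)"
proof -
  have "M * A * M * B = (M * A) * (M * B)" "M * B * M * A = (M * B) * (M * A)"
    using assms by (simp_all add: assoc_mult_mat_dims)
  then show ?thesis using mtr_mult_comm[of "M * A" n n "M * B"] assms by simp
qed

lemma wp_inner_swap:
  assumes "minv Y \<in> carrier_mat n n"
    and "fst V \<in> carrier_mat n n" "snd V \<in> carrier_mat n n" "fst W \<in> carrier_mat n n" "snd W \<in> carrier_mat n n"
  shows "wp_inner Y V W = wp_inner Y W V"
  using mtr_sandwich_swap[OF assms(1)] assms(2-) unfolding wp_inner_eq by simp

lemma wp_inner_add:
  assumes "minv Y \<in> carrier_mat n n"
    and "fst A \<in> carrier_mat n n" "snd A \<in> carrier_mat n n" "fst B \<in> carrier_mat n n" "snd B \<in> carrier_mat n n"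
    and "fst W \<in> carrier_mat n n" "snd W \<in> carrier_mat n n"
  shows "wp_inner Y (fst A + fst B, snd A + snd B) W = wp_inner Y A W + wp_inner Y B W"
  using mtr_sandwich_add[OF assms(1)] assms(2-) unfolding wp_inner_eq by (simp add: add_divide_distrib)

lemma wp_inner_pythagoras:
  assumes M: "minv Y \<in> carrier_mat n n"
    and H: "fst H \<in> carrier_mat n n" "snd H \<in> carrier_mat n n"
    and K: "fst K \<in> carrier_mat n n" "snd K \<in> carrier_mat n n"
    and orth: "wp_inner Y H K = 0"
  defines "V \<equiv> (fst H + fst K, snd H + snd K)"
  shows "wp_inner Y V V = wp_inner Y H H + wp_inner Y K K" and "wp_inner Y V K = wp_inner Y K K"
proof -
  have V: "fst V \<in> carrier_mat n n" "snd V \<in> carrier_mat n n" unfolding V_def using H K by auto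
  have VK: "wp_inner Y V K = wp_inner Y K K"
    using wp_inner_add[OF M H K K] orth unfolding V_def by simp
  then show "wp_inner Y V K = wp_inner Y K K" .
  have "wp_inner Y V V = wp_inner Y H V + wp_inner Y K V"
    using wp_inner_add[OF M H K V] unfolding V_def by simp
  also have "wp_inner Y H V = wp_inner Y H H"
    using wp_inner_swap[OF M V H] wp_inner_add[OF M H K H] wp_inner_swap[OF M K H] orth
    unfolding V_def by simp
  also have "wp_inner Y K V = wp_inner Y K K" using VK wp_inner_swap[OF M V K] by simp
  finally show "wp_inner Y V V = wp_inner Y H H + wp_inner Y K K" .
qed

context posdef_blocks
begin

definition horizontal_lift :: "(real mat \<times> real mat) \<times> real mat \<Rightarrow> real mat \<times> real mat" where
  "horizontal_lift W = (diag_lift (fst (fst W)) (0\<^sub>m k k), diag_lift (snd (fst W)) (snd W))"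

lemma dproj_iff_blks:
  assumes "X \<in> carrier_mat (m + k) (m + k)" "symmat (m + k) (fst V)" "symmat (m + k) (snd V)"
  shows "dproj m (X, Y) V W \<longleftrightarrow>
    W = ((ul_blk m (fst V), ul_blk m (snd V)), schur_compl_deriv m Y (snd V))"
proof -
  have "det (ul_blk m Y) \<noteq> 0" using posdef_det_nonzero[OF posdef_blks(1)[OF posdef_Y]] .
  then show ?thesis using dproj_iff[OF assms(1) Y_carrier] assms(2,3) unfolding symmat_def by blast
qed

lemma horizontal_lift_symmat:
  assumes "symmat m (fst (fst W))" "symmat m (snd (fst W))" "symmat k (snd W)"
  shows "symmat (m + k) (fst (horizontal_lift W))" "symmat (m + k) (snd (horizontal_lift W))"
  using assms diag_lift_carrier diag_lift_symmetric unfolding horizontal_lift_def symmat_def by auto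

lemma dproj_horizontal_lift:
  assumes X: "X \<in> carrier_mat (m + k) (m + k)"
    and W: "symmat m (fst (fst W))" "symmat m (snd (fst W))" "symmat k (snd W)"
  shows "dproj m (X, Y) (horizontal_lift W) W"
  using dproj_iff_blks[OF X horizontal_lift_symmat[OF W]] W
  unfolding horizontal_lift_def symmat_def by (simp add: diag_lift_blks)

lemma schur_compl_deriv_carrier:
  assumes "U \<in> carrier_mat (m + k) (m + k)"
  shows "schur_compl_deriv m Y U \<in> carrier_mat k k"
  using blk_carrier_mat[OF assms] H_carrier unfolding schur_compl_deriv_eq[OF assms] carrier_mat_def by simp

lemma wp_inner_horizontal_lift:
  assumes W: "symmat m (fst (fst W))" "symmat m (snd (fst W))" "symmat k (snd W)"
  shows "wp_inner Y (horizontal_lift W) (horizontal_lift W) = target_sqnorm (proj m (X, Y)) W"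
proof -
  define A B T where "A = fst (fst W)" "B = snd (fst W)" "T = snd W"
  have c: "A \<in> carrier_mat m m" "transpose_mat A = A" "B \<in> carrier_mat m m" "transpose_mat B = B"
    "T \<in> carrier_mat k k" "transpose_mat T = T"
    using W unfolding A_B_T_def symmat_def by auto
  note HL = horizontal_lift_symmat[OF W, unfolded symmat_def horizontal_lift_def, folded A_B_T_def]
  have "mtr (minv Y * diag_lift A (0\<^sub>m k k) * minv Y * diag_lift A (0\<^sub>m k k)) = mtr (N1 * A * N1 * A)"
    using mtr_minv_Y_diag_lift[of "diag_lift A (0\<^sub>m k k)" A "0\<^sub>m k k"] HL c N1 Nt
    by (simp add: diag_lift_blks mtr_def assoc_mult_mat_dims)
  moreover have "mtr (minv Y * diag_lift B T * minv Y * diag_lift B T) = mtr (N1 * B * N1 * B) + mtr (Nt * T * Nt * T)"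
    using mtr_minv_Y_diag_lift[of "diag_lift B T" B T] HL c by (simp add: diag_lift_blks)
  moreover have "target_sqnorm (proj m (X, Y)) W =
      (mtr (N1 * A * N1 * A) + mtr (N1 * B * N1 * B)) / 2 + mtr (Nt * T * Nt * T) / 2"
    unfolding target_sqnorm_def proj_eq_blks wp_inner_eq trwp_inner_def Let_def fst_conv snd_conv
    unfolding Y1_def[symmetric] Y2_def[symmetric] Y4_def[symmetric] N1_def[symmetric] t_def[symmetric]
      Nt_def[symmetric] A_B_T_def by simp
  ultimately show ?thesis unfolding wp_inner_eq horizontal_lift_def A_B_T_def by simp
qed

lemma dproj_zero_iff:
  assumes "X \<in> carrier_mat (m + k) (m + k)" "symmat (m + k) (fst K)" "symmat (m + k) (snd K)"
  shows "dproj m (X, Y) K ((0\<^sub>m m m, 0\<^sub>m m m), 0\<^sub>m k k) \<longleftrightarrow>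
    ul_blk m (fst K) = 0\<^sub>m m m \<and> ul_blk m (snd K) = 0\<^sub>m m m \<and> schur_compl_deriv m Y (snd K) = 0\<^sub>m k k"
  using dproj_iff_blks[OF assms] by auto

lemma wp_inner_horizontal_vertical:
  assumes X: "X \<in> carrier_mat (m + k) (m + k)"
    and W: "symmat m (fst (fst W))" "symmat m (snd (fst W))" "symmat k (snd W)"
    and K: "symmat (m + k) (fst K)" "symmat (m + k) (snd K)"
    and vert: "dproj m (X, Y) K ((0\<^sub>m m m, 0\<^sub>m m m), 0\<^sub>m k k)"
  shows "wp_inner Y (horizontal_lift W) K = 0"
proof -
  have "ul_blk m (fst K) = 0\<^sub>m m m" "ul_blk m (snd K) = 0\<^sub>m m m" "schur_compl_deriv m Y (snd K) = 0\<^sub>m k k"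
    using vert dproj_zero_iff[OF X K] by simp_all
  moreover have "schur_compl_deriv m Y (fst K) \<in> carrier_mat k k"
    using K schur_compl_deriv_carrier unfolding symmat_def by blast
  ultimately show ?thesis
    using W K N1 Nt mtr_minv_Y_diag_lift
    unfolding wp_inner_eq horizontal_lift_def symmat_def by (simp add: mtr_def carrier_matD)
qed

lemma dproj_symmat:
  assumes X: "X \<in> carrier_mat (m + k) (m + k)"
    and V: "symmat (m + k) (fst V)" "symmat (m + k) (snd V)" and d: "dproj m (X, Y) V W"
  shows "symmat m (fst (fst W))" "symmat m (snd (fst W))" "symmat k (snd W)"
proof -
  have "W = ((ul_blk m (fst V), ul_blk m (snd V)), schur_compl_deriv m Y (snd V))"
    using d dproj_iff_blks[OF X V] by simp
  then show "symmat m (fst (fst W))" "symmat m (snd (fst W))" "symmat k (snd W)"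
    using V blk_carrier_mat blks_symmetric schur_compl_deriv_carrier schur_compl_deriv_symmetric
    unfolding symmat_def by auto
qed

lemma blks_minus_diag_lift:
  assumes U: "symmat (m + k) U" and P: "symmat m P" and Q: "symmat k Q"
  shows "ul_blk m (U - diag_lift P Q) = ul_blk m U - P"
    and "schur_compl_deriv m Y (U - diag_lift P Q) = schur_compl_deriv m Y U - Q"
proof -
  have c: "diag_lift P Q \<in> carrier_mat (m + k) (m + k)" "transpose_mat (diag_lift P Q) = diag_lift P Q"
    using P Q diag_lift_carrier diag_lift_symmetric unfolding symmat_def by auto
  show "ul_blk m (U - diag_lift P Q) = ul_blk m U - P"
    using U P Q blk_minus(1)[OF _ c(1)] diag_lift_blks(1) unfolding symmat_def by simp
  show "schur_compl_deriv m Y (U - diag_lift P Q) = schur_compl_deriv m Y U - Q"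
    using U P Q schur_compl_deriv_minus[OF _ _ c] diag_lift_blks(2) unfolding symmat_def by simp
qed

lemma dproj_minus_horizontal_lift:
  assumes X: "X \<in> carrier_mat (m + k) (m + k)"
    and V: "symmat (m + k) (fst V)" "symmat (m + k) (snd V)" and d: "dproj m (X, Y) V W"
  defines "K \<equiv> (fst V - fst (horizontal_lift W), snd V - snd (horizontal_lift W))"
  shows "symmat (m + k) (fst K)" "symmat (m + k) (snd K)"
    and "dproj m (X, Y) K ((0\<^sub>m m m, 0\<^sub>m m m), 0\<^sub>m k k)"
proof -
  note W = dproj_symmat[OF X V d]
  show K: "symmat (m + k) (fst K)" "symmat (m + k) (snd K)"
    using V horizontal_lift_symmat[OF W] unfolding K_def symmat_def by (auto simp: transpose_minus)
  have "W = ((ul_blk m (fst V), ul_blk m (snd V)), schur_compl_deriv m Y (snd V))"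
    using d dproj_iff_blks[OF X V] by simp
  then show "dproj m (X, Y) K ((0\<^sub>m m m, 0\<^sub>m m m), 0\<^sub>m k k)"
    using dproj_zero_iff[OF X K] V W blks_minus_diag_lift[OF V(1)] blks_minus_diag_lift[OF V(2)]
      blk_carrier_mat schur_compl_deriv_carrier
    unfolding K_def horizontal_lift_def symmat_def by (auto simp: symmat_def)
qed

lemma dproj_orthogonal_decomposition:
  assumes X: "X \<in> carrier_mat (m + k) (m + k)"
    and V: "symmat (m + k) (fst V)" "symmat (m + k) (snd V)" and d: "dproj m (X, Y) V W"
  obtains K where "symmat (m + k) (fst K)" "symmat (m + k) (snd K)"
    and "dproj m (X, Y) K ((0\<^sub>m m m, 0\<^sub>m m m), 0\<^sub>m k k)"
    and "wp_inner Y V V = target_sqnorm (proj m (X, Y)) W + wp_inner Y K K"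
    and "wp_inner Y V K = wp_inner Y K K"
proof -
  define K where "K = (fst V - fst (horizontal_lift W), snd V - snd (horizontal_lift W))"
  note W = dproj_symmat[OF X V d] and K = dproj_minus_horizontal_lift[OF X V d, folded K_def]
  note HL = horizontal_lift_symmat[OF W]
  have "V = (fst (horizontal_lift W) + fst K, snd (horizontal_lift W) + snd K)"
    using V HL unfolding K_def symmat_def by (auto intro!: eq_matI simp: prod_eq_iff)
  moreover have "minv Y \<in> carrier_mat (m + k) (m + k)"
    unfolding minv_Y using L_carrier Dginv_carrier by simp
  ultimately have "wp_inner Y V V = wp_inner Y (horizontal_lift W) (horizontal_lift W) + wp_inner Y K K"
      "wp_inner Y V K = wp_inner Y K K"
    using wp_inner_pythagoras[of Y "m + k" "horizontal_lift W" K]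
      wp_inner_horizontal_vertical[OF X W K] HL K(1,2) unfolding symmat_def by auto
  then show ?thesis using that K wp_inner_horizontal_lift[OF W] by simp
qed

lemma dproj_isometric_on_horizontal:
  assumes X: "X \<in> carrier_mat (m + k) (m + k)"
    and V: "symmat (m + k) (fst V)" "symmat (m + k) (snd V)" and d: "dproj m (X, Y) V W"
    and hor: "\<And>K. symmat (m + k) (fst K) \<Longrightarrow> symmat (m + k) (snd K) \<Longrightarrow>
      dproj m (X, Y) K ((0\<^sub>m m m, 0\<^sub>m m m), 0\<^sub>m k k) \<Longrightarrow> wp_inner Y V K = 0"
  shows "target_sqnorm (proj m (X, Y)) W = wp_inner Y V V"
proof -
  obtain K where "symmat (m + k) (fst K)" "symmat (m + k) (snd K)"
    "dproj m (X, Y) K ((0\<^sub>m m m, 0\<^sub>m m m), 0\<^sub>m k k)"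
    "wp_inner Y V V = target_sqnorm (proj m (X, Y)) W + wp_inner Y K K" "wp_inner Y V K = wp_inner Y K K"
    using dproj_orthogonal_decomposition[OF X V d] .
  then show ?thesis using hor by simp
qed

lemma dproj_norm_le:
  assumes X: "X \<in> carrier_mat (m + k) (m + k)"
    and V: "symmat (m + k) (fst V)" "symmat (m + k) (snd V)" and d: "dproj m (X, Y) V W"
  shows "target_sqnorm (proj m (X, Y)) W \<le> wp_inner Y V V"
proof -
  obtain K where "symmat (m + k) (fst K)" "symmat (m + k) (snd K)"
    "wp_inner Y V V = target_sqnorm (proj m (X, Y)) W + wp_inner Y K K"
    using dproj_orthogonal_decomposition[OF X V d] by metis
  then show ?thesis using wp_inner_nonneg[OF posdef_Y] by fastforce
qed

end

theorem lemma3p11: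
  fixes g g' :: nat
  assumes "1 \<le> g" and "g' < g"
  shows "\<forall>X Y. siegel g X Y \<longrightarrow>
    (let g'' = g - g'; \<tau> = (X, Y); p = proj g' \<tau> in
      \<comment> \<open>differential defined on every tangent vector\<close>
      (\<forall>V. symmat g (fst V) \<and> symmat g (snd V) \<longrightarrow> (\<exists>W. dproj g' \<tau> V W)) \<and>
      \<comment> \<open>surjectivity of the differential\<close>
      (\<forall>W. symmat g' (fst (fst W)) \<and> symmat g' (snd (fst W)) \<and> symmat g'' (snd W) \<longrightarrow>
         (\<exists>V. symmat g (fst V) \<and> symmat g (snd V) \<and> dproj g' \<tau> V W)) \<and>
      \<comment> \<open>isometry on the horizontal space (orthogonal complement of the kernel)\<close>
      (\<forall>V W. symmat g (fst V) \<and> symmat g (snd V) \<and> dproj g' \<tau> V W \<and>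
         (\<forall>K. symmat g (fst K) \<and> symmat g (snd K) \<and>
              dproj g' \<tau> K ((0\<^sub>m g' g', 0\<^sub>m g' g'), 0\<^sub>m g'' g'') \<longrightarrow> wp_inner Y V K = 0)
         \<longrightarrow> target_sqnorm p W = wp_inner Y V V) \<and>
      \<comment> \<open>in particular: the differential does not increase lengths (1-Lipschitz)\<close>
      (\<forall>V W. symmat g (fst V) \<and> symmat g (snd V) \<and> dproj g' \<tau> V W
         \<longrightarrow> target_sqnorm p W \<le> wp_inner Y V V))"
proof -
  \<comment> \<open>\<open>1 \<le> g\<close> is implied by \<open>g' < g\<close> and not needed.\<close>
  obtain k where g: "g = g' + k" using assms(2) less_imp_add_positive by blast
  then have k: "g - g' = k" by simp
  have X: "X \<in> carrier_mat (g' + k) (g' + k)" and Y: "posdef_blocks g' k Y" if "siegel g X Y" for X Y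
    using that unfolding siegel_def symmat_def g by (auto intro: posdef_blocks.intro)
  show ?thesis unfolding Let_def k
  proof (intro allI impI conjI, goal_cases)
    case (1 X Y V)
    then show ?case using posdef_blocks.dproj_iff_blks[OF Y X] unfolding g by blast
  next
    case (2 X Y W)
    then show ?case
      using posdef_blocks.horizontal_lift_symmat[OF Y] posdef_blocks.dproj_horizontal_lift[OF Y X]
      unfolding g by blast
  next
    case (3 X Y V W)
    then show ?case using posdef_blocks.dproj_isometric_on_horizontal[OF Y X] unfolding g by blast
  next
    case (4 X Y V W)
    then show ?case using posdef_blocks.dproj_norm_le[OF Y X] unfolding g by blast
  qed
qed

end
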